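(* $\mathrm{HS}_{\mathsf{lin}}$ and $\mathrm{HS}_{\mathsf{st}}$ are expressively incomparable, and so are $\mathrm{HS}_{\mathsf{lin}}$ and $\mathrm{HS}_{\mathsf{ct}}$.
   Context: A Kripke structure over a finite set $\mathcal{AP}$ is $K=(\mathcal{AP},S,\delta,\mu,s_0)$ with states $S$, left-total $\delta\subseteq S\times S$, labelling $\mu:S\to2^{\mathcal{AP}}$, initial state $s_0$; finite if $S$ is finite. An infinite path is an infinite state sequence following $\delta$; a trace is a non-empty finite prefix of one; initial means starting at $s_0$. For a finite word $w=w(0)\cdots w(n)$, $\mathrm{Pref}(w)=\{w[0,i]\mid 0\le i\le n-1\}$, $\mathrm{Suff}(w)=\{w[i,n]\mid 1\le i\le n\}$. The computation tree $C(K)$ has as states the initial traces of $K$, initial state $s_0$, labelling $\rho\mapsto\mu(\text{last state of }\rho)$, transitions $(\rho,\rho\cdot s)$. $\mathrm{HS}$ formulas: $\psi::=p\mid\neg\psi\mid\psi\wedge\psi\mid\langle X\rangle\psi$ for the Allen relations $A,L,B,E,D,O$ and inverses; all modalities are definable (non-strict semantics) from $\langle B\rangle,\langle E\rangle,\langle\bar B\rangle,\langle\bar E\rangle$. State-based: over traces of $K$, $\rho\models p$ iff $p\in\mu(s)$ for every state $s$ of $\rho$; $\rho\models\langle B\rangle\psi$ iff some $\rho'\in\mathrm{Pref}(\rho)$ satisfies $\psi$; $\rho\models\langle E\rangle\psi$ iff some $\rho'\in\mathrm{Suff}(\rho)$ does; $\rho\models\langle\bar B\rangle\psi$ iff some trace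 $\rho'$ with $\rho\in\mathrm{Pref}(\rho')$ does; $\rho\models\langle\bar E\rangle\psi$ iff some trace $\rho'$ with $\rho\in\mathrm{Suff}(\rho')$ does. $K\models_{\mathsf{st}}\psi$ iff every initial trace satisfies $\psi$. Computation-tree-based: $K\models_{\mathsf{ct}}\psi$ iff $C(K)\models_{\mathsf{st}}\psi$. Trace-based: for an infinite path $\pi$, intervals $[i,j]$, $0\le i\le j$; $[i,j]\models p$ iff $p\in\mu(\pi(h))$ for all $i\le h\le j$; $[x,y]\models\langle B\rangle\psi$ iff $[x,z]\models\psi$ for some $x\le z<y$; $\langle E\rangle$: $[v,y]$ for some $x<v\le y$; $\langle\bar B\rangle$: $[x,z]$ for some $z>y$; $\langle\bar E\rangle$: $[v,y]$ for some $v<x$. $K\models_{\mathsf{lin}}\psi$ iff for every initial infinite path $\pi$ and $i\ge0$, $[0,i]\models\psi$ in $\pi$. $\mathrm{HS}_{\mathsf{st}},\mathrm{HS}_{\mathsf{ct}},\mathrm{HS}_{\mathsf{lin}}$ denote $\mathrm{HS}$ under these semantics. Expressiveness: $\varphi_1\in L_1$, $\varphi_2\in L_2$ are equivalent if for every finite Kripke structure $K$, $K$ is a model of $\varphi_1$ in $L_1$ iff of $\varphi_2$ in $L_2$; $L_1\ge L_2$ if every $L_2$ formula has an equivalent $L_1$ formula; $L_1,L_2$ are expressively incomparable if $L_1\not\ge L_2$ and $L_2\not\ge L_1$. *)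

theory Defs
  imports Main
begin

record ('s, 'ap) kripke =
  St   :: "'s set"
  Tr   :: "('s \<times> 's) set"
  Lab  :: "'s \<Rightarrow> 'ap set"
  Init :: "'s"

definition wf_kripke :: "('s, 'ap) kripke \<Rightarrow> bool" where
  "wf_kripke K \<longleftrightarrow> Tr K \<subseteq> St K \<times> St K \<and> (\<forall>s\<in>St K. \<exists>t. (s, t) \<in> Tr K) \<and> Init K \<in> St K"

definition finite_kripke :: "('s, 'ap) kripke \<Rightarrow> bool" where
  "finite_kripke K \<longleftrightarrow> wf_kripke K \<and> finite (St K)"

definition is_inf_path :: "('s, 'ap) kripke \<Rightarrow> (nat \<Rightarrow> 's) \<Rightarrow> bool" where
  "is_inf_path K \<pi> \<longleftrightarrow> (\<forall>i. (\<pi> i, \<pi> (Suc i)) \<in> Tr K)"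

definition is_trace :: "('s, 'ap) kripke \<Rightarrow> 's list \<Rightarrow> bool" where
  "is_trace K \<rho> \<longleftrightarrow> \<rho> \<noteq> [] \<and> (\<exists>\<pi>. is_inf_path K \<pi> \<and> \<rho> = map \<pi> [0..<length \<rho>])"

definition is_init_trace :: "('s, 'ap) kripke \<Rightarrow> 's list \<Rightarrow> bool" where
  "is_init_trace K \<rho> \<longleftrightarrow> is_trace K \<rho> \<and> hd \<rho> = Init K"

definition Pref :: "'s list \<Rightarrow> 's list set" where
  "Pref w = {take i w | i. 1 \<le> i \<and> i < length w}"

definition Suff :: "'s list \<Rightarrow> 's list set" where
  "Suff w = {drop i w | i. 1 \<le> i \<and> i < length w}"

section \<open>HS formulas (modalities B, E, B-bar, E-bar; the others are definable)\<close>

datatype 'ap hs =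
    Prop 'ap
  | Neg "'ap hs"
  | And "'ap hs" "'ap hs"
  | Bm "'ap hs"
  | Em "'ap hs"
  | Bbar "'ap hs"
  | Ebar "'ap hs"

fun sat_st :: "('s, 'ap) kripke \<Rightarrow> 's list \<Rightarrow> 'ap hs \<Rightarrow> bool" where
  "sat_st K \<rho> (Prop p) \<longleftrightarrow> (\<forall>s\<in>set \<rho>. p \<in> Lab K s)"
| "sat_st K \<rho> (Neg \<psi>) \<longleftrightarrow> \<not> sat_st K \<rho> \<psi>"
| "sat_st K \<rho> (And \<psi> \<chi>) \<longleftrightarrow> sat_st K \<rho> \<psi> \<and> sat_st K \<rho> \<chi>"
| "sat_st K \<rho> (Bm \<psi>) \<longleftrightarrow> (\<exists>\<rho>'\<in>Pref \<rho>. sat_st K \<rho>' \<psi>)"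
| "sat_st K \<rho> (Em \<psi>) \<longleftrightarrow> (\<exists>\<rho>'\<in>Suff \<rho>. sat_st K \<rho>' \<psi>)"
| "sat_st K \<rho> (Bbar \<psi>) \<longleftrightarrow> (\<exists>\<rho>'. is_trace K \<rho>' \<and> \<rho> \<in> Pref \<rho>' \<and> sat_st K \<rho>' \<psi>)"
| "sat_st K \<rho> (Ebar \<psi>) \<longleftrightarrow> (\<exists>\<rho>'. is_trace K \<rho>' \<and> \<rho> \<in> Suff \<rho>' \<and> sat_st K \<rho>' \<psi>)"

definition models_st :: "('s, 'ap) kripke \<Rightarrow> 'ap hs \<Rightarrow> bool" where
  "models_st K \<psi> \<longleftrightarrow> (\<forall>\<rho>. is_init_trace K \<rho> \<longrightarrow> sat_st K \<rho> \<psi>)"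

definition comp_tree :: "('s, 'ap) kripke \<Rightarrow> ('s list, 'ap) kripke" where
  "comp_tree K = \<lparr> St = {\<rho>. is_init_trace K \<rho>},
                   Tr = {(\<rho>, \<rho> @ [s]) | \<rho> s. is_init_trace K \<rho> \<and> is_init_trace K (\<rho> @ [s])},
                   Lab = (\<lambda>\<rho>. Lab K (last \<rho>)),
                   Init = [Init K] \<rparr>"

definition models_ct :: "('s, 'ap) kripke \<Rightarrow> 'ap hs \<Rightarrow> bool" where
  "models_ct K \<psi> \<longleftrightarrow> models_st (comp_tree K) \<psi>"

fun sat_lin :: "('s, 'ap) kripke \<Rightarrow> (nat \<Rightarrow> 's) \<Rightarrow> nat \<Rightarrow> nat \<Rightarrow> 'ap hs \<Rightarrow> bool" where
  "sat_lin K \<pi> x y (Prop p) \<longleftrightarrow> (\<forall>h. x \<le> h \<and> h \<le> y \<longrightarrow> p \<in> Lab K (\<pi> h))"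
| "sat_lin K \<pi> x y (Neg \<psi>) \<longleftrightarrow> \<not> sat_lin K \<pi> x y \<psi>"
| "sat_lin K \<pi> x y (And \<psi> \<chi>) \<longleftrightarrow> sat_lin K \<pi> x y \<psi> \<and> sat_lin K \<pi> x y \<chi>"
| "sat_lin K \<pi> x y (Bm \<psi>) \<longleftrightarrow> (\<exists>z. x \<le> z \<and> z < y \<and> sat_lin K \<pi> x z \<psi>)"
| "sat_lin K \<pi> x y (Em \<psi>) \<longleftrightarrow> (\<exists>v. x < v \<and> v \<le> y \<and> sat_lin K \<pi> v y \<psi>)"
| "sat_lin K \<pi> x y (Bbar \<psi>) \<longleftrightarrow> (\<exists>z. z > y \<and> sat_lin K \<pi> x z \<psi>)"
| "sat_lin K \<pi> x y (Ebar \<psi>) \<longleftrightarrow> (\<exists>v. v < x \<and> sat_lin K \<pi> v y \<psi>)"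

definition models_lin :: "('s, 'ap) kripke \<Rightarrow> 'ap hs \<Rightarrow> bool" where
  "models_lin K \<psi> \<longleftrightarrow>
     (\<forall>\<pi>. is_inf_path K \<pi> \<and> \<pi> 0 = Init K \<longrightarrow> (\<forall>i. sat_lin K \<pi> 0 i \<psi>))"

section \<open>Expressiveness (over finite Kripke structures; states w.l.o.g. natural numbers)\<close>

type_synonym 'ap semantics = "(nat, 'ap) kripke \<Rightarrow> 'ap hs \<Rightarrow> bool"

definition expr_equiv :: "'ap semantics \<Rightarrow> 'ap hs \<Rightarrow> 'ap semantics \<Rightarrow> 'ap hs \<Rightarrow> bool" where
  "expr_equiv L1 \<phi>1 L2 \<phi>2 \<longleftrightarrow> (\<forall>K. finite_kripke K \<longrightarrow> (L1 K \<phi>1 \<longleftrightarrow> L2 K \<phi>2))"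

definition expr_geq :: "'ap semantics \<Rightarrow> 'ap semantics \<Rightarrow> bool" where
  "expr_geq L1 L2 \<longleftrightarrow> (\<forall>\<phi>2. \<exists>\<phi>1. expr_equiv L1 \<phi>1 L2 \<phi>2)"

definition expr_incomparable :: "'ap semantics \<Rightarrow> 'ap semantics \<Rightarrow> bool" where
  "expr_incomparable L1 L2 \<longleftrightarrow> \<not> expr_geq L1 L2 \<and> \<not> expr_geq L2 L1"

end

(*
  HS_lin only sees the label sequences of initial paths. A one-state loop and a lasso whose
  initial state has no predecessor have the same (empty) label sequences, but the formula
  <E-bar> true separates them under the state-based semantics; two trees that branch into a
  labelled and an unlabelled sink at different depths have the same label sequences but are
  separated under the computation-tree semantics by "every trace of length 2 extends to one of
  length 3 ending outside p".

  Conversely, <B-bar><E>(point and p) says under the linear semantics that p eventually holds.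
  It holds in the chain 1 -> 2 -> ... -> K -> K+1 whose only p-state is the absorbing state K+1,
  and fails when the chain is entered from a state 0 with a self-loop. Unfolding the chain along
  the integers, a trace is described by the positions of its endpoints relative to K+1, and an
  Ehrenfeucht-Fraisse argument shows that a formula of modal depth h sees these positions only
  up to pairwise distances saturated at 2^h, every modality halving the threshold. Hence for
  K = 2^(h+1) no formula of depth h separates the two chains under the state-based or the
  computation-tree semantics.
*)

theory Submission
  imports Defs
begin

section \<open>Label sequences and derived HS formulas\<close>

lemma sat_lin_cong:
  assumes "\<And>t. Lab K (\<pi> t) = Lab K' (\<pi>' t)"
  shows "sat_lin K \<pi> x y \<psi> \<longleftrightarrow> sat_lin K' \<pi>' x y \<psi>"
  using assms by (induction \<psi> arbitrary: x y) auto

definition init_label_seqs :: "('s, 'ap) kripke \<Rightarrow> (nat \<Rightarrow> 'ap set) set" where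
  "init_label_seqs K = (\<lambda>\<pi>. Lab K \<circ> \<pi>) ` {\<pi>. is_inf_path K \<pi> \<and> \<pi> 0 = Init K}"

lemma models_lin_mono_label_seqs:
  assumes sub: "init_label_seqs K' \<subseteq> init_label_seqs K" and K: "models_lin K \<psi>"
  shows "models_lin K' \<psi>"
  unfolding models_lin_def
proof (intro allI impI)
  fix \<pi>' i assume "is_inf_path K' \<pi>' \<and> \<pi>' 0 = Init K'"
  then have "Lab K' \<circ> \<pi>' \<in> init_label_seqs K" using sub unfolding init_label_seqs_def by blast
  then obtain \<pi> where \<pi>: "is_inf_path K \<pi>" "\<pi> 0 = Init K" and lab: "Lab K' \<circ> \<pi>' = Lab K \<circ> \<pi>"
    unfolding init_label_seqs_def by auto
  have "sat_lin K \<pi> 0 i \<psi>" using K \<pi> unfolding models_lin_def by blast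
  moreover have "Lab K (\<pi> t) = Lab K' (\<pi>' t)" for t using fun_cong[OF lab, of t] by simp
  ultimately show "sat_lin K' \<pi>' 0 i \<psi>" using sat_lin_cong by blast
qed

lemma models_lin_cong_label_seqs:
  "init_label_seqs K = init_label_seqs K' \<Longrightarrow> models_lin K \<psi> \<longleftrightarrow> models_lin K' \<psi>"
  using models_lin_mono_label_seqs[of K K' \<psi>] models_lin_mono_label_seqs[of K' K \<psi>] by auto

lemma init_label_seqs_const:
  assumes "Lab K = (\<lambda>_. L)" "is_inf_path K \<pi>" "\<pi> 0 = Init K"
  shows "init_label_seqs K = {\<lambda>_. L}"
  using assms unfolding init_label_seqs_def by (auto simp: comp_def)

lemma is_inf_path_absorbed:
  assumes "is_inf_path K \<pi>" "\<pi> i = s" "\<And>t. (s, t) \<in> Tr K \<Longrightarrow> t = s" "i \<le> j"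
  shows "\<pi> j = s"
  using assms(4)
proof (induction j rule: dec_induct)
  case (step j)
  then show ?case using assms(1,3) unfolding is_inf_path_def by metis
qed (use assms(2) in simp)

lemma is_init_trace_map:
  "is_inf_path K \<sigma> \<Longrightarrow> \<sigma> 0 = Init K \<Longrightarrow> 0 < m \<Longrightarrow> is_init_trace K (map \<sigma> [0..<m])"
  unfolding is_init_trace_def is_trace_def by (auto simp: hd_map intro!: exI[of _ \<sigma>])

lemma is_init_traceE:
  assumes "is_init_trace K h"
  obtains \<sigma> where "is_inf_path K \<sigma>" "\<sigma> 0 = Init K" "h = map \<sigma> [0..<length h]" "h \<noteq> []"
proof -
  from assms obtain \<sigma> where ne: "h \<noteq> []" and p: "is_inf_path K \<sigma>" and hs: "h = map \<sigma> [0..<length h]"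
    and hd: "hd h = Init K" unfolding is_init_trace_def is_trace_def by blast
  have "\<sigma> 0 = Init K" using hd ne by (subst (asm) hs) (simp add: hd_map)
  from that[OF p this hs ne] show ?thesis .
qed

lemma not_expr_geqI:
  assumes "\<And>\<psi>. \<exists>K K'. finite_kripke K \<and> finite_kripke K' \<and> L2 K \<phi> \<and> \<not> L2 K' \<phi> \<and> (L1 K \<psi> \<longleftrightarrow> L1 K' \<psi>)"
  shows "\<not> expr_geq L1 L2"
  using assms unfolding expr_geq_def expr_equiv_def by blast

lemma Pref_nth: "\<rho> \<in> Pref \<rho>' \<Longrightarrow> j < length \<rho> \<Longrightarrow> \<rho> ! j = \<rho>' ! j"
  unfolding Pref_def by auto

lemma drop_length_minus_one: "xs \<noteq> [] \<Longrightarrow> drop (length xs - 1) xs = [last xs]"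
  by (cases xs rule: rev_cases) auto

text \<open>The syntax has no constant for truth, so the derived formulas are parametrised by an
  arbitrary proposition.\<close>

definition hs_true :: "'ap \<Rightarrow> 'ap hs" where
  "hs_true a = Neg (And (Prop a) (Neg (Prop a)))"

definition hs_point :: "'ap \<Rightarrow> 'ap hs" where
  "hs_point a = Neg (Bm (hs_true a))"

fun hs_longer :: "'ap \<Rightarrow> nat \<Rightarrow> 'ap hs" where
  "hs_longer a 0 = hs_true a"
| "hs_longer a (Suc n) = Bm (hs_longer a n)"

definition hs_length :: "'ap \<Rightarrow> nat \<Rightarrow> 'ap hs" where
  "hs_length a n = And (hs_longer a (n - 1)) (Neg (hs_longer a n))"

definition hs_last_not :: "'ap \<Rightarrow> 'ap hs" where
  "hs_last_not a = Em (And (hs_point a) (Neg (Prop a)))"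

definition hs_future :: "'ap \<Rightarrow> 'ap hs" where
  "hs_future a = Bbar (Em (And (hs_point a) (Prop a)))"

definition hs_extends_unlabelled :: "'ap \<Rightarrow> 'ap hs" where
  "hs_extends_unlabelled a =
     Neg (And (hs_length a 2) (Neg (Bbar (And (hs_length a 3) (hs_last_not a)))))"

fun hs_height :: "'ap hs \<Rightarrow> nat" where
  "hs_height (Prop p) = 0"
| "hs_height (Neg \<psi>) = hs_height \<psi>"
| "hs_height (And \<psi> \<chi>) = max (hs_height \<psi>) (hs_height \<chi>)"
| "hs_height (Bm \<psi>) = Suc (hs_height \<psi>)"
| "hs_height (Em \<psi>) = Suc (hs_height \<psi>)"
| "hs_height (Bbar \<psi>) = Suc (hs_height \<psi>)"
| "hs_height (Ebar \<psi>) = Suc (hs_height \<psi>)"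

lemma sat_st_hs_true [simp]: "sat_st K \<rho> (hs_true a)"
  by (auto simp: hs_true_def)

lemma sat_lin_hs_true [simp]: "sat_lin K \<pi> x y (hs_true a)"
  by (auto simp: hs_true_def)

lemma sat_st_hs_point: "sat_st K \<rho> (hs_point a) \<longleftrightarrow> length \<rho> \<le> 1"
  by (auto simp: hs_point_def Pref_def)

lemma sat_lin_hs_point: "sat_lin K \<pi> x y (hs_point a) \<longleftrightarrow> y \<le> x"
  by (auto simp: hs_point_def)

lemma sat_st_hs_longer: "0 < n \<Longrightarrow> sat_st K \<rho> (hs_longer a n) \<longleftrightarrow> n < length \<rho>"
proof (induction n arbitrary: \<rho>)
  case (Suc n)
  show ?case
  proof (cases "n = 0")
    case True then show ?thesis by (auto simp: Pref_def)
  next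
    case False
    then have "sat_st K \<rho> (hs_longer a (Suc n)) \<longleftrightarrow> (\<exists>i. 1 \<le> i \<and> i < length \<rho> \<and> n < i)"
      using Suc.IH by (auto simp: Pref_def)
    also have "\<dots> \<longleftrightarrow> Suc n < length \<rho>" using False by (auto intro: exI[of _ "Suc n"])
    finally show ?thesis .
  qed
qed simp

lemma sat_st_hs_length: "2 \<le> n \<Longrightarrow> sat_st K \<rho> (hs_length a n) \<longleftrightarrow> length \<rho> = n"
  by (auto simp: hs_length_def sat_st_hs_longer)

lemma sat_st_hs_last_not: "sat_st K \<rho> (hs_last_not a) \<longleftrightarrow> 2 \<le> length \<rho> \<and> a \<notin> Lab K (last \<rho>)"
proof -
  have "sat_st K \<rho> (hs_last_not a) \<longleftrightarrow>
      (\<exists>i. 1 \<le> i \<and> i < length \<rho> \<and> length \<rho> \<le> Suc i \<and> (\<exists>s\<in>set (drop i \<rho>). a \<notin> Lab K s))"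
    by (auto simp: hs_last_not_def Suff_def sat_st_hs_point)
  also have "\<dots> \<longleftrightarrow> 2 \<le> length \<rho> \<and> (\<exists>s\<in>set (drop (length \<rho> - 1) \<rho>). a \<notin> Lab K s)"
  proof
    assume "\<exists>i. 1 \<le> i \<and> i < length \<rho> \<and> length \<rho> \<le> Suc i \<and> (\<exists>s\<in>set (drop i \<rho>). a \<notin> Lab K s)"
    then obtain i where i: "1 \<le> i" "i < length \<rho>" "length \<rho> \<le> Suc i"
      "\<exists>s\<in>set (drop i \<rho>). a \<notin> Lab K s" by blast
    then have "i = length \<rho> - 1" by linarith
    with i show "2 \<le> length \<rho> \<and> (\<exists>s\<in>set (drop (length \<rho> - 1) \<rho>). a \<notin> Lab K s)" by auto
  next
    assume "2 \<le> length \<rho> \<and> (\<exists>s\<in>set (drop (length \<rho> - 1) \<rho>). a \<notin> Lab K s)"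
    then show "\<exists>i. 1 \<le> i \<and> i < length \<rho> \<and> length \<rho> \<le> Suc i \<and> (\<exists>s\<in>set (drop i \<rho>). a \<notin> Lab K s)"
      by (intro exI[of _ "length \<rho> - 1"]) auto
  qed
  also have "\<dots> \<longleftrightarrow> 2 \<le> length \<rho> \<and> a \<notin> Lab K (last \<rho>)"
    using drop_length_minus_one[of \<rho>] by (cases "\<rho> = []") auto
  finally show ?thesis .
qed

lemma sat_st_hs_extends_unlabelled:
  "sat_st K \<rho> (hs_extends_unlabelled a) \<longleftrightarrow>
     (length \<rho> = 2 \<longrightarrow> (\<exists>\<rho>'. is_trace K \<rho>' \<and> \<rho> \<in> Pref \<rho>' \<and> length \<rho>' = 3 \<and> a \<notin> Lab K (last \<rho>')))"
  by (auto simp: hs_extends_unlabelled_def sat_st_hs_length sat_st_hs_last_not) force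

lemma sat_lin_hs_future:
  "sat_lin K \<pi> x y (hs_future a) \<longleftrightarrow> (\<exists>z>y. x < z \<and> a \<in> Lab K (\<pi> z))"
  by (auto simp: hs_future_def sat_lin_hs_point) (metis order.refl order_antisym)+

section \<open>Traces of the computation tree\<close>

lemma Init_comp_tree [simp]: "Init (comp_tree K) = [Init K]"
  by (simp add: comp_tree_def)

lemma Lab_comp_tree [simp]: "Lab (comp_tree K) \<rho> = Lab K (last \<rho>)"
  by (simp add: comp_tree_def)

lemma comp_tree_path_step:
  assumes "is_inf_path (comp_tree K) \<pi>"
  shows "\<exists>t. \<pi> (Suc i) = \<pi> i @ [t]" "is_init_trace K (\<pi> i)"
  using assms[unfolded is_inf_path_def, rule_format, of i] by (auto simp: comp_tree_def)

lemma comp_tree_path_length: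
  assumes "is_inf_path (comp_tree K) \<pi>"
  shows "length (\<pi> i) = length (\<pi> 0) + i"
proof (induction i)
  case (Suc i)
  then show ?case using comp_tree_path_step(1)[OF assms, of i] by auto
qed simp

lemma comp_tree_path_take:
  assumes p: "is_inf_path (comp_tree K) \<pi>" and "i \<le> j"
  shows "take (length (\<pi> i)) (\<pi> j) = \<pi> i"
  using \<open>i \<le> j\<close>
proof (induction j rule: dec_induct)
  case (step j)
  obtain t where "\<pi> (Suc j) = \<pi> j @ [t]" using comp_tree_path_step(1)[OF p] by blast
  moreover have "length (\<pi> i) \<le> length (\<pi> j)"
    using comp_tree_path_length[OF p, of i] comp_tree_path_length[OF p, of j] step(1) by simp
  ultimately show ?case using step.IH by simp
qed simp

definition prefixes_from :: "nat \<Rightarrow> 's list \<Rightarrow> 's list list" where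
  "prefixes_from k h = map (\<lambda>j. take j h) [k..<Suc (length h)]"

lemma length_prefixes_from [simp]: "length (prefixes_from k h) = Suc (length h) - k"
  by (auto simp: prefixes_from_def Suc_diff_le)

lemma hd_prefixes_from: "k \<le> length h \<Longrightarrow> hd (prefixes_from k h) = take k h"
  by (simp add: prefixes_from_def upt_conv_Cons del: upt_Suc)

lemma nth_prefixes_from [simp]: "i < Suc (length h) - k \<Longrightarrow> prefixes_from k h ! i = take (k + i) h"
  by (simp add: prefixes_from_def del: upt_Suc)

lemma last_prefixes_from: "k \<le> length h \<Longrightarrow> last (prefixes_from k h) = h"
  by (simp add: prefixes_from_def last_map del: upt_Suc)

lemma comp_tree_traceE:
  assumes "is_trace (comp_tree K) \<rho>"
  obtains h k where "is_init_trace K h" "1 \<le> k" "k \<le> length h" "\<rho> = prefixes_from k h"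
proof -
  from assms obtain \<pi> where ne: "\<rho> \<noteq> []" and p: "is_inf_path (comp_tree K) \<pi>"
    and \<rho>: "\<rho> = map \<pi> [0..<length \<rho>]" unfolding is_trace_def by blast
  define h where "h = \<pi> (length \<rho> - 1)"
  define k where "k = length (\<pi> 0)"
  have lh: "length h = k + length \<rho> - 1"
    unfolding h_def k_def using comp_tree_path_length[OF p, of "length \<rho> - 1"] ne by (cases \<rho>) auto
  then have kh: "k \<le> length h" using ne by (cases \<rho>) auto
  have "is_init_trace K (\<pi> 0)" using comp_tree_path_step(2)[OF p] .
  then have k: "1 \<le> k" unfolding k_def is_init_trace_def is_trace_def by (cases "\<pi> 0") auto
  have "\<rho> = prefixes_from k h"
  proof (rule nth_equalityI)
    fix i assume i: "i < length \<rho>"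
    have "\<rho> ! i = \<pi> i" using i by (subst \<rho>) simp
    also have "\<dots> = take (length (\<pi> i)) h"
      unfolding h_def using comp_tree_path_take[OF p, of i "length \<rho> - 1"] i by simp
    also have "\<dots> = take (k + i) h" using comp_tree_path_length[OF p, of i] unfolding k_def by simp
    finally show "\<rho> ! i = prefixes_from k h ! i" using i lh k by simp
  qed (use lh k ne in simp)
  moreover have "is_init_trace K h" unfolding h_def using comp_tree_path_step(2)[OF p] .
  ultimately show ?thesis using that k kh by blast
qed

lemma is_trace_comp_tree_prefixes_from:
  assumes h: "is_init_trace K h" and k: "1 \<le> k" "k \<le> length h"
  shows "is_trace (comp_tree K) (prefixes_from k h)"
proof -
  obtain \<sigma> where \<sigma>: "is_inf_path K \<sigma>" "\<sigma> 0 = Init K" and hs: "h = map \<sigma> [0..<length h]"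
    using h by (rule is_init_traceE)
  define \<pi> where "\<pi> i = map \<sigma> [0..<k + i]" for i
  have "is_inf_path (comp_tree K) \<pi>"
    unfolding is_inf_path_def
  proof
    fix i
    have "is_init_trace K (\<pi> i)" "is_init_trace K (\<pi> i @ [\<sigma> (k + i)])"
      using is_init_trace_map[OF \<sigma>, of "k + i"] is_init_trace_map[OF \<sigma>, of "Suc (k + i)"] k
      by (simp_all add: \<pi>_def)
    then show "(\<pi> i, \<pi> (Suc i)) \<in> Tr (comp_tree K)" by (auto simp: comp_tree_def \<pi>_def)
  qed
  moreover have "prefixes_from k h = map \<pi> [0..<length (prefixes_from k h)]"
  proof (rule nth_equalityI)
    fix i assume i: "i < length (prefixes_from k h)"
    then have "k + i \<le> length h" using k by simp
    then have "take (k + i) h = map \<sigma> [0..<k + i]" by (subst hs) (simp add: take_map)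
    then show "prefixes_from k h ! i = map \<pi> [0..<length (prefixes_from k h)] ! i"
      using i by (simp add: \<pi>_def del: upt_Suc)
  qed simp
  moreover have "prefixes_from k h \<noteq> []" using k by (auto simp flip: length_greater_0_conv)
  ultimately show ?thesis unfolding is_trace_def by blast
qed

lemma is_trace_comp_tree_iff:
  "is_trace (comp_tree K) \<rho> \<longleftrightarrow>
     (\<exists>h k. is_init_trace K h \<and> 1 \<le> k \<and> k \<le> length h \<and> \<rho> = prefixes_from k h)"
proof
  assume "is_trace (comp_tree K) \<rho>"
  then show "\<exists>h k. is_init_trace K h \<and> 1 \<le> k \<and> k \<le> length h \<and> \<rho> = prefixes_from k h"
    by (rule comp_tree_traceE) blast
qed (auto simp: is_trace_comp_tree_prefixes_from)

lemma is_init_trace_comp_tree_iff: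
  "is_init_trace (comp_tree K) \<rho> \<longleftrightarrow> (\<exists>h. is_init_trace K h \<and> \<rho> = prefixes_from 1 h)"
proof
  assume "is_init_trace (comp_tree K) \<rho>"
  then obtain h k where h: "is_init_trace K h" "1 \<le> k" "k \<le> length h" and \<rho>: "\<rho> = prefixes_from k h"
    and "hd \<rho> = [Init K]"
    unfolding is_init_trace_def is_trace_comp_tree_iff by (auto simp: comp_tree_def)
  then have "take k h = [Init K]" by (simp add: hd_prefixes_from)
  then have "length (take k h) = 1" by simp
  then have "k = 1" using h(3) by simp
  then show "\<exists>h. is_init_trace K h \<and> \<rho> = prefixes_from 1 h" using h \<rho> by blast
next
  assume "\<exists>h. is_init_trace K h \<and> \<rho> = prefixes_from 1 h"
  then obtain h where h: "is_init_trace K h" and \<rho>: "\<rho> = prefixes_from 1 h" by blast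
  then have ne: "h \<noteq> []" and "hd h = Init K" unfolding is_init_trace_def is_trace_def by auto
  then have "hd \<rho> = [Init K]" using \<rho> by (cases h) (simp_all add: hd_prefixes_from)
  moreover have "is_trace (comp_tree K) \<rho>"
    unfolding is_trace_comp_tree_iff using h \<rho> ne by (intro exI[of _ h] exI[of _ 1]) (simp add: Suc_le_eq)
  ultimately show "is_init_trace (comp_tree K) \<rho>" by (simp add: is_init_trace_def comp_tree_def)
qed

section \<open>Structures with the same label sequences\<close>

definition loop_kripke :: "(nat, 'ap) kripke" where
  "loop_kripke = \<lparr>St = {0}, Tr = {(0, 0)}, Lab = (\<lambda>_. {}), Init = 0\<rparr>"

definition lasso_kripke :: "(nat, 'ap) kripke" where
  "lasso_kripke = \<lparr>St = {0, 1}, Tr = {(0, 1), (1, 1)}, Lab = (\<lambda>_. {}), Init = 0\<rparr>"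

lemma finite_loop_lasso: "finite_kripke loop_kripke" "finite_kripke lasso_kripke"
  by (auto simp: finite_kripke_def wf_kripke_def loop_kripke_def lasso_kripke_def)

lemma init_label_seqs_loop_lasso:
  "init_label_seqs (loop_kripke :: (nat, 'ap) kripke) = init_label_seqs lasso_kripke"
proof -
  have "init_label_seqs (loop_kripke :: (nat, 'ap) kripke) = {\<lambda>_. {}}"
    by (rule init_label_seqs_const[where \<pi> = "\<lambda>_. 0"])
      (simp_all add: loop_kripke_def is_inf_path_def)
  moreover have "init_label_seqs (lasso_kripke :: (nat, 'ap) kripke) = {\<lambda>_. {}}"
    by (rule init_label_seqs_const[where \<pi> = "\<lambda>t. if t = 0 then 0 else 1"])
      (simp_all add: lasso_kripke_def is_inf_path_def)
  ultimately show ?thesis by simp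
qed

lemma models_st_loop: "models_st (loop_kripke :: (nat, 'ap) kripke) (Ebar (hs_true a))"
  unfolding models_st_def
proof (intro allI impI)
  let ?K = "loop_kripke :: (nat, 'ap) kripke"
  fix \<rho> assume "is_init_trace ?K \<rho>"
  then obtain \<sigma> where \<sigma>: "is_inf_path ?K \<sigma>" "\<sigma> 0 = Init ?K"
    and \<rho>: "\<rho> = map \<sigma> [0..<length \<rho>]" "\<rho> \<noteq> []"
    by (rule is_init_traceE)
  have "\<sigma> = (\<lambda>_. 0)" using \<sigma> by (simp add: fun_eq_iff is_inf_path_def loop_kripke_def)
  then have \<rho>0: "\<rho> = replicate (length \<rho>) 0" using \<rho>(1) by (simp add: map_replicate_const)
  have "is_trace ?K (0 # \<rho>)"
    unfolding is_trace_def is_inf_path_def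
    by (auto simp: loop_kripke_def intro!: exI[of _ "\<lambda>_. 0"])
      (subst \<rho>0, simp add: map_replicate_const replicate_append_same)
  moreover have "\<rho> \<in> Suff (0 # \<rho>)" unfolding Suff_def using \<rho>(2) by (intro CollectI exI[of _ 1]) auto
  ultimately show "sat_st ?K \<rho> (Ebar (hs_true a))" by auto
qed

text \<open>The initial state of the lasso has no predecessor, so the initial trace [0] cannot be
  extended to the left.\<close>

lemma not_models_st_lasso: "\<not> models_st (lasso_kripke :: (nat, 'ap) kripke) (Ebar (hs_true a))"
proof -
  let ?K = "lasso_kripke :: (nat, 'ap) kripke"
  have "is_inf_path ?K (\<lambda>t. if t = 0 then 0 else 1)"
    by (simp add: is_inf_path_def lasso_kripke_def)
  then have "is_init_trace ?K (map (\<lambda>t. if t = 0 then 0 else 1) [0..<1])"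
    by (rule is_init_trace_map) (simp_all add: lasso_kripke_def)
  then have "is_init_trace ?K [0]" by simp
  moreover have "\<not> sat_st ?K [0] (Ebar (hs_true a))"
  proof
    assume "sat_st ?K [0] (Ebar (hs_true a))"
    then obtain \<rho>' where "is_trace ?K \<rho>'" and "[0] \<in> Suff \<rho>'" by auto
    then obtain \<pi> i where \<pi>: "is_inf_path ?K \<pi>" and i: "1 \<le> i" "i < length \<rho>'"
      and "drop i \<rho>' = [0]" and "\<rho>' = map \<pi> [0..<length \<rho>']"
      unfolding is_trace_def Suff_def by auto
    then have "\<pi> i = 0" by (metis Cons_nth_drop_Suc list.inject nth_map_upt add_0 diff_zero)
    moreover have "(\<pi> (i - 1), \<pi> i) \<in> Tr ?K"
      using \<pi> i unfolding is_inf_path_def by (metis Suc_diff_1 less_le_trans zero_less_one)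
    ultimately show False by (simp add: lasso_kripke_def)
  qed
  ultimately show ?thesis unfolding models_st_def by blast
qed

lemma not_lin_geq_st: "\<not> expr_geq (models_lin :: 'ap semantics) models_st"
  by (rule not_expr_geqI[where \<phi> = "Ebar (hs_true undefined)"], rule exI[of _ loop_kripke],
      rule exI[of _ lasso_kripke])
    (simp add: finite_loop_lasso models_st_loop not_models_st_lasso
      models_lin_cong_label_seqs[OF init_label_seqs_loop_lasso])

definition late_branch_kripke :: "(nat, 'ap) kripke" where
  "late_branch_kripke = \<lparr>St = {0, 1, 2, 3}, Tr = {(0, 1), (1, 2), (1, 3), (2, 2), (3, 3)},
     Lab = (\<lambda>s. if s = 2 then UNIV else {}), Init = 0\<rparr>"

definition early_branch_kripke :: "(nat, 'ap) kripke" where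
  "early_branch_kripke = \<lparr>St = {0, 1, 2, 3, 4}, Tr = {(0, 1), (0, 4), (1, 2), (4, 3), (2, 2), (3, 3)},
     Lab = (\<lambda>s. if s = 2 then UNIV else {}), Init = 0\<rparr>"

lemma finite_branch_kripke: "finite_kripke late_branch_kripke" "finite_kripke early_branch_kripke"
  by (auto simp: finite_kripke_def wf_kripke_def late_branch_kripke_def early_branch_kripke_def)

lemma late_branch_path:
  assumes p: "is_inf_path (late_branch_kripke :: (nat, 'ap) kripke) \<pi>" and "\<pi> 0 = 0"
  shows "\<pi> 1 = 1" "\<pi> 2 = 2 \<or> \<pi> 2 = 3" "2 \<le> t \<Longrightarrow> \<pi> t = \<pi> 2"
proof -
  have tr: "(\<pi> t, \<pi> (Suc t)) \<in> {(0, 1), (1, 2), (1, 3), (2, 2), (3, 3)}" for t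
    using p by (simp add: is_inf_path_def late_branch_kripke_def)
  show 1: "\<pi> 1 = 1" using tr[of 0] \<open>\<pi> 0 = 0\<close> by auto
  show 2: "\<pi> 2 = 2 \<or> \<pi> 2 = 3" using tr[of 1] 1 by (auto simp: numeral_2_eq_2)
  show "2 \<le> t \<Longrightarrow> \<pi> t = \<pi> 2"
    by (rule is_inf_path_absorbed[OF p refl]) (use 2 in \<open>auto simp: late_branch_kripke_def\<close>)
qed

lemma early_branch_path:
  assumes p: "is_inf_path (early_branch_kripke :: (nat, 'ap) kripke) \<pi>" and "\<pi> 0 = 0"
  shows "\<pi> 1 = 1 \<or> \<pi> 1 = 4" "\<pi> 2 = (if \<pi> 1 = 1 then 2 else 3)" "2 \<le> t \<Longrightarrow> \<pi> t = \<pi> 2"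
proof -
  have tr: "(\<pi> t, \<pi> (Suc t)) \<in> {(0, 1), (0, 4), (1, 2), (4, 3), (2, 2), (3, 3)}" for t
    using p by (simp add: is_inf_path_def early_branch_kripke_def)
  show 1: "\<pi> 1 = 1 \<or> \<pi> 1 = 4" using tr[of 0] \<open>\<pi> 0 = 0\<close> by auto
  show 2: "\<pi> 2 = (if \<pi> 1 = 1 then 2 else 3)" using tr[of 1] 1 by (auto simp: numeral_2_eq_2)
  show "2 \<le> t \<Longrightarrow> \<pi> t = \<pi> 2"
    by (rule is_inf_path_absorbed[OF p refl]) (use 2 in \<open>auto simp: early_branch_kripke_def\<close>)
qed

lemma init_label_seqs_late_branch:
  "init_label_seqs (late_branch_kripke :: (nat, 'ap) kripke) = {\<lambda>t. if 2 \<le> t then UNIV else {}, \<lambda>_. {}}"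
  (is "init_label_seqs ?K = {?hit, ?miss}")
proof
  show "init_label_seqs ?K \<subseteq> {?hit, ?miss}"
  proof
    fix w assume "w \<in> init_label_seqs ?K"
    then obtain \<pi> where \<pi>: "is_inf_path ?K \<pi>" "\<pi> 0 = 0" and w: "w = Lab ?K \<circ> \<pi>"
      unfolding init_label_seqs_def by (auto simp: late_branch_kripke_def)
    note path = late_branch_path[OF \<pi>]
    have "w t = (if \<pi> 2 = 2 then ?hit t else ?miss t)" for t
      using path(1,2) path(3)[of t] \<pi>(2)
      by (cases "t < 2") (auto simp: w late_branch_kripke_def less_2_cases_iff)
    then have "w = (if \<pi> 2 = 2 then ?hit else ?miss)" by (simp add: fun_eq_iff)
    then show "w \<in> {?hit, ?miss}" by simp
  qed
next
  define \<pi>\<^sub>2 :: "nat \<Rightarrow> nat" where "\<pi>\<^sub>2 t = (if t = 0 then 0 else if t = 1 then 1 else 2)" for t :: nat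
  define \<pi>\<^sub>3 :: "nat \<Rightarrow> nat" where "\<pi>\<^sub>3 t = (if t = 0 then 0 else if t = 1 then 1 else 3)" for t :: nat
  have "?hit = Lab ?K \<circ> \<pi>\<^sub>2" "?miss = Lab ?K \<circ> \<pi>\<^sub>3"
    by (auto simp: fun_eq_iff late_branch_kripke_def \<pi>\<^sub>2_def \<pi>\<^sub>3_def)
  moreover have "Lab ?K \<circ> \<pi>\<^sub>2 \<in> init_label_seqs ?K" "Lab ?K \<circ> \<pi>\<^sub>3 \<in> init_label_seqs ?K"
    unfolding init_label_seqs_def
    by (rule imageI, simp add: is_inf_path_def late_branch_kripke_def \<pi>\<^sub>2_def \<pi>\<^sub>3_def)+
  ultimately show "{?hit, ?miss} \<subseteq> init_label_seqs ?K" by simp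
qed

lemma init_label_seqs_early_branch:
  "init_label_seqs (early_branch_kripke :: (nat, 'ap) kripke) = {\<lambda>t. if 2 \<le> t then UNIV else {}, \<lambda>_. {}}"
  (is "init_label_seqs ?K = {?hit, ?miss}")
proof
  show "init_label_seqs ?K \<subseteq> {?hit, ?miss}"
  proof
    fix w assume "w \<in> init_label_seqs ?K"
    then obtain \<pi> where \<pi>: "is_inf_path ?K \<pi>" "\<pi> 0 = 0" and w: "w = Lab ?K \<circ> \<pi>"
      unfolding init_label_seqs_def by (auto simp: early_branch_kripke_def)
    note path = early_branch_path[OF \<pi>]
    have "w t = (if \<pi> 1 = 1 then ?hit t else ?miss t)" for t
      using path(1,2) path(3)[of t] \<pi>(2)
      by (cases "t < 2") (auto simp: w early_branch_kripke_def less_2_cases_iff)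
    then have "w = (if \<pi> 1 = 1 then ?hit else ?miss)" by (simp add: fun_eq_iff)
    then show "w \<in> {?hit, ?miss}" by simp
  qed
next
  define \<pi>\<^sub>2 :: "nat \<Rightarrow> nat" where "\<pi>\<^sub>2 t = (if t = 0 then 0 else if t = 1 then 1 else 2)" for t
  define \<pi>\<^sub>3 :: "nat \<Rightarrow> nat" where "\<pi>\<^sub>3 t = (if t = 0 then 0 else if t = 1 then 4 else 3)" for t
  have "?hit = Lab ?K \<circ> \<pi>\<^sub>2" "?miss = Lab ?K \<circ> \<pi>\<^sub>3"
    by (auto simp: fun_eq_iff early_branch_kripke_def \<pi>\<^sub>2_def \<pi>\<^sub>3_def)
  moreover have "Lab ?K \<circ> \<pi>\<^sub>2 \<in> init_label_seqs ?K" "Lab ?K \<circ> \<pi>\<^sub>3 \<in> init_label_seqs ?K"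
    unfolding init_label_seqs_def
    by (rule imageI, simp add: is_inf_path_def early_branch_kripke_def \<pi>\<^sub>2_def \<pi>\<^sub>3_def)+
  ultimately show "{?hit, ?miss} \<subseteq> init_label_seqs ?K" by simp
qed

lemma models_ct_late_branch:
  "models_ct (late_branch_kripke :: (nat, 'ap) kripke) (hs_extends_unlabelled a)"
  unfolding models_ct_def models_st_def
proof (intro allI impI)
  let ?K = "late_branch_kripke :: (nat, 'ap) kripke"
  fix \<rho> assume "is_init_trace (comp_tree ?K) \<rho>"
  then obtain h where h: "is_init_trace ?K h" and \<rho>: "\<rho> = prefixes_from 1 h"
    unfolding is_init_trace_comp_tree_iff by blast
  show "sat_st (comp_tree ?K) \<rho> (hs_extends_unlabelled a)"
    unfolding sat_st_hs_extends_unlabelled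
  proof
    assume "length \<rho> = 2"
    then have lh: "length h = 2" using \<rho> by simp
    obtain \<sigma> where \<sigma>: "is_inf_path ?K \<sigma>" "\<sigma> 0 = Init ?K" and hs: "h = map \<sigma> [0..<length h]"
      using h by (rule is_init_traceE)
    have "\<sigma> 1 = 1" using late_branch_path(1)[OF \<sigma>(1)] \<sigma>(2) by (simp add: late_branch_kripke_def)
    then have "h = [0, 1]" using hs lh \<sigma>(2) by (simp add: late_branch_kripke_def numeral_2_eq_2)
    then have \<rho>01: "\<rho> = [[0], [0, 1]]" using \<rho> by (simp add: prefixes_from_def numeral_2_eq_2)
    define \<pi> :: "nat \<Rightarrow> nat" where "\<pi> t = (if t = 0 then 0 else if t = 1 then 1 else 3)" for t
    have "is_init_trace ?K (map \<pi> [0..<3])"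
      by (rule is_init_trace_map) (simp_all add: is_inf_path_def late_branch_kripke_def \<pi>_def)
    then have "is_init_trace (comp_tree ?K) [[0], [0, 1], [0, 1, 3]]"
      unfolding is_init_trace_comp_tree_iff
      by (intro exI[of _ "[0, 1, 3]"]) (simp add: \<pi>_def prefixes_from_def numeral_3_eq_3)
    moreover have "\<rho> \<in> Pref [[0], [0, 1], [0, 1, 3]]"
      unfolding \<rho>01 Pref_def by (intro CollectI exI[of _ 2]) simp
    ultimately show "\<exists>\<rho>'. is_trace (comp_tree ?K) \<rho>' \<and> \<rho> \<in> Pref \<rho>' \<and> length \<rho>' = 3 \<and>
        a \<notin> Lab (comp_tree ?K) (last \<rho>')"
      by (intro exI[of _ "[[0], [0, 1], [0, 1, 3]]"])
        (simp add: is_init_trace_def comp_tree_def late_branch_kripke_def)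
  qed
qed

text \<open>In the early branching structure the choice between the two sinks is made at the
  initial state, so the initial trace 0 1 has only the labelled continuation 0 1 2.\<close>

lemma not_models_ct_early_branch:
  "\<not> models_ct (early_branch_kripke :: (nat, 'ap) kripke) (hs_extends_unlabelled a)"
proof
  let ?K = "early_branch_kripke :: (nat, 'ap) kripke"
  assume models: "models_ct ?K (hs_extends_unlabelled a)"
  define \<pi> :: "nat \<Rightarrow> nat" where "\<pi> t = (if t = 0 then 0 else if t = 1 then 1 else 2)" for t
  have "is_init_trace ?K (map \<pi> [0..<2])"
    by (rule is_init_trace_map) (simp_all add: is_inf_path_def early_branch_kripke_def \<pi>_def)
  then have "is_init_trace (comp_tree ?K) [[0], [0, 1]]"
    unfolding is_init_trace_comp_tree_iff
    by (intro exI[of _ "[0, 1]"]) (simp add: \<pi>_def prefixes_from_def numeral_2_eq_2)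
  then obtain \<rho>' where tr: "is_trace (comp_tree ?K) \<rho>'" and pref: "[[0], [0, 1]] \<in> Pref \<rho>'"
    and len: "length \<rho>' = 3" and unlab: "a \<notin> Lab (comp_tree ?K) (last \<rho>')"
    using models unfolding models_ct_def models_st_def sat_st_hs_extends_unlabelled by fastforce
  have \<rho>'01: "\<rho>' ! 0 = [0]" "\<rho>' ! 1 = [0, 1]"
    using Pref_nth[OF pref, of 0] Pref_nth[OF pref, of 1] by simp_all
  moreover have "\<rho>' \<noteq> []" using len by auto
  ultimately have "hd \<rho>' = [Init ?K]" by (simp add: hd_conv_nth early_branch_kripke_def)
  then have "is_init_trace (comp_tree ?K) \<rho>'" using tr by (simp add: is_init_trace_def)
  then obtain h where h: "is_init_trace ?K h" and \<rho>': "\<rho>' = prefixes_from 1 h"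
    unfolding is_init_trace_comp_tree_iff by blast
  have lh: "length h = 3" using len \<rho>' by simp
  obtain \<sigma> where \<sigma>: "is_inf_path ?K \<sigma>" "\<sigma> 0 = Init ?K" and hs: "h = map \<sigma> [0..<length h]"
    using h by (rule is_init_traceE)
  have h_nth: "h ! i = \<sigma> i" if "i < length h" for i using that by (subst hs) simp
  have "take 2 h = [0, 1]" using \<rho>'01(2) \<rho>' lh by (simp add: numeral_2_eq_2)
  then have "\<sigma> 1 = 1" using h_nth[of 1] nth_take[of 1 2 h] lh by simp
  then have "\<sigma> 2 = 2" using early_branch_path(2)[OF \<sigma>(1)] \<sigma>(2) by (simp add: early_branch_kripke_def)
  moreover have "last \<rho>' = h" using \<rho>' lh by (simp add: last_prefixes_from)
  moreover have "last h = \<sigma> 2" using h_nth[of 2] lh last_conv_nth[of h] by force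
  ultimately show False using unlab by (simp add: comp_tree_def early_branch_kripke_def)
qed

lemma not_lin_geq_ct: "\<not> expr_geq (models_lin :: 'ap semantics) models_ct"
  by (rule not_expr_geqI[where \<phi> = "hs_extends_unlabelled undefined"],
      rule exI[of _ late_branch_kripke], rule exI[of _ early_branch_kripke])
    (simp add: finite_branch_kripke models_ct_late_branch not_models_ct_early_branch
      models_lin_cong_label_seqs init_label_seqs_late_branch init_label_seqs_early_branch)

section \<open>Threshold equivalence of integer configurations\<close>

definition thr_eq :: "int \<Rightarrow> int \<Rightarrow> int \<Rightarrow> bool" where
  "thr_eq T a b \<longleftrightarrow> a = b \<or> (T \<le> a \<and> T \<le> b) \<or> (a \<le> -T \<and> b \<le> -T)"

definition thr_equiv :: "int \<Rightarrow> int list \<Rightarrow> int list \<Rightarrow> bool" where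
  "thr_equiv T xs ys \<longleftrightarrow> length xs = length ys \<and>
     (\<forall>i<length xs. \<forall>j<length xs. thr_eq T (xs ! i - xs ! j) (ys ! i - ys ! j))"

lemma thr_eq_refl [simp]: "thr_eq T a a"
  by (simp add: thr_eq_def)

lemma thr_eq_sym: "thr_eq T a b \<Longrightarrow> thr_eq T b a"
  by (auto simp: thr_eq_def)

lemma thr_eq_minus_iff: "thr_eq T (a - b) (c - d) \<longleftrightarrow> thr_eq T (b - a) (d - c)"
  by (auto simp: thr_eq_def)

lemma thr_eq_mono: "thr_eq T a b \<Longrightarrow> T' \<le> T \<Longrightarrow> thr_eq T' a b"
  by (auto simp: thr_eq_def)

lemma thr_eq_sign:
  assumes "0 < T" "thr_eq T a b"
  shows "0 < a \<longleftrightarrow> 0 < b" "0 \<le> a \<longleftrightarrow> 0 \<le> b"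
  using assms by (auto simp: thr_eq_def)

lemma thr_equiv_sym: "thr_equiv T xs ys \<Longrightarrow> thr_equiv T ys xs"
  by (auto simp: thr_equiv_def thr_eq_sym)

lemma thr_equiv_mono: "thr_equiv T xs ys \<Longrightarrow> T' \<le> T \<Longrightarrow> thr_equiv T' xs ys"
  unfolding thr_equiv_def using thr_eq_mono by blast

lemma thr_equiv_map_nth:
  assumes "thr_equiv T xs ys" "\<forall>i\<in>set is. i < length xs"
  shows "thr_equiv T (map ((!) xs) is) (map ((!) ys) is)"
  using assms unfolding thr_equiv_def by auto

lemma thr_equiv_iff_zip:
  "thr_equiv T xs ys \<longleftrightarrow> length xs = length ys \<and>
     (\<forall>p\<in>set (zip xs ys). \<forall>q\<in>set (zip xs ys). thr_eq T (fst p - fst q) (snd p - snd q))"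
  unfolding thr_equiv_def by (auto simp: set_zip) (metis fst_conv snd_conv)+

lemma thr_equiv2: "thr_equiv T [a, b] [a', b'] \<longleftrightarrow> thr_eq T (b - a) (b' - a')"
  unfolding thr_equiv_iff_zip by (auto simp: thr_eq_minus_iff)

lemma thr_equiv3: "thr_equiv T [a, b, c] [a', b', c'] \<longleftrightarrow>
  thr_eq T (b - a) (b' - a') \<and> thr_eq T (c - a) (c' - a') \<and> thr_eq T (c - b) (c' - b')"
  unfolding thr_equiv_iff_zip by (auto simp: thr_eq_minus_iff)

lemma thr_equiv4: "thr_equiv T [a, b, c, d] [a', b', c', d'] \<longleftrightarrow>
  thr_eq T (b - a) (b' - a') \<and> thr_eq T (c - a) (c' - a') \<and> thr_eq T (d - a) (d' - a') \<and>
  thr_eq T (c - b) (c' - b') \<and> thr_eq T (d - b) (d' - b') \<and> thr_eq T (d - c) (d' - c')"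
  unfolding thr_equiv_iff_zip by (auto simp: thr_eq_minus_iff)

lemma thr_equiv_pair:
  "thr_equiv T xs ys \<Longrightarrow> i < length xs \<Longrightarrow> j < length xs \<Longrightarrow>
     thr_equiv T [xs ! i, xs ! j] [ys ! i, ys ! j]"
  using thr_equiv_map_nth[of T xs ys "[i, j]"] by simp

lemma thr_equiv_pair_less_iff: "0 < T \<Longrightarrow> thr_equiv T [p, q] [p', q'] \<Longrightarrow> p < q \<longleftrightarrow> p' < q'"
  using thr_eq_sign(1)[of T "q - p" "q' - p'"] by (simp add: thr_equiv2)

lemma thr_equiv_pair_le_iff: "0 < T \<Longrightarrow> thr_equiv T [p, q] [p', q'] \<Longrightarrow> p \<le> q \<longleftrightarrow> p' \<le> q'"
  using thr_eq_sign(2)[of T "q - p" "q' - p'"] by (simp add: thr_equiv2)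

lemma thr_equiv_snocI:
  assumes R: "thr_equiv T xs ys" and T: "0 < T"
    and new: "\<And>j. j < length xs \<Longrightarrow> thr_eq T (x - xs ! j) (y - ys ! j)"
  shows "thr_equiv T (xs @ [x]) (ys @ [y])"
proof -
  have len: "length xs = length ys" using R by (simp add: thr_equiv_def)
  have "thr_eq T ((xs @ [x]) ! i - (xs @ [x]) ! j) ((ys @ [y]) ! i - (ys @ [y]) ! j)"
    if "i < Suc (length xs)" "j < Suc (length xs)" for i j
    using that R new[of i] new[of j] len
    by (cases "i = length xs"; cases "j = length xs")
      (auto simp: nth_append thr_equiv_def less_Suc_eq thr_eq_minus_iff)
  then show ?thesis using len by (simp add: thr_equiv_def)
qed

lemma thr_equiv_snoc_far:
  assumes T: "0 < T" and R: "thr_equiv (2 * T) xs ys"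
    and far: "\<And>i. i < length xs \<Longrightarrow> T \<le> \<bar>x - xs ! i\<bar>"
  shows "\<exists>y. thr_equiv T (xs @ [x]) (ys @ [y])"
proof -
  have R1: "thr_equiv T xs ys" using thr_equiv_mono[OF R] T by simp
  define L where "L = {i. i < length xs \<and> xs ! i < x}"
  show ?thesis
  proof (cases "L = {}")
    case True
    define m where "m = Min ((!) ys ` {..<length xs})"
    have "m \<le> ys ! j" if "j < length xs" for j unfolding m_def using that by simp
    moreover have "x + T \<le> xs ! j" if "j < length xs" for j
      using True far[OF that] that unfolding L_def by force
    ultimately have "thr_eq T (x - xs ! j) (m - T - ys ! j)" if "j < length xs" for j
      using that by (force simp: thr_eq_def)
    then show ?thesis using thr_equiv_snocI[OF R1 T] by blast
  next
    case False
    define m where "m = Max ((!) ys ` L)"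
    have finL: "finite L" unfolding L_def by simp
    have "m \<in> (!) ys ` L" unfolding m_def using finL False by (intro Max_in) auto
    then obtain i0 where i0: "i0 < length xs" "xs ! i0 + T \<le> x" "m = ys ! i0"
      using far unfolding L_def by force
    have mge: "ys ! j \<le> m" if "j \<in> L" for j unfolding m_def using finL that by simp
    have "thr_eq T (x - xs ! j) (m + T - ys ! j)" if j: "j < length xs" for j
    proof (cases "j \<in> L")
      case True
      then show ?thesis using far[OF j] mge[OF True] unfolding L_def by (auto simp: thr_eq_def)
    next
      case False
      then have xj: "x + T \<le> xs ! j" using far[OF j] j unfolding L_def by force
      moreover have "thr_eq (2 * T) (xs ! j - xs ! i0) (ys ! j - ys ! i0)"
        using R j i0(1) by (simp add: thr_equiv_def)
      ultimately have "2 * T \<le> ys ! j - ys ! i0" using i0(2) T by (auto simp: thr_eq_def)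
      then show ?thesis using xj i0(3) by (auto simp: thr_eq_def)
    qed
    then show ?thesis using thr_equiv_snocI[OF R1 T] by blast
  qed
qed

text \<open>The extension step of an Ehrenfeucht-Fraisse game on the integers: a new point can be
  matched at the cost of halving the threshold. A point close to an old one is copied with the
  same offset; a point far from all old ones is placed at distance T beyond the image of the
  nearest old point on its left (or below all points if there is none).\<close>

lemma thr_equiv_snoc:
  assumes T: "0 < T" and R: "thr_equiv (2 * T) xs ys"
  shows "\<exists>y. thr_equiv T (xs @ [x]) (ys @ [y])"
proof (cases "\<exists>i<length xs. \<bar>x - xs ! i\<bar> < T")
  case True
  then obtain i where i: "i < length xs" "\<bar>x - xs ! i\<bar> < T" by blast
  have "thr_eq T (x - xs ! j) (ys ! i + (x - xs ! i) - ys ! j)" if j: "j < length xs" for j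
  proof -
    have "thr_eq (2 * T) (xs ! i - xs ! j) (ys ! i - ys ! j)" using R i(1) j by (simp add: thr_equiv_def)
    then show ?thesis using i(2) by (auto simp: thr_eq_def)
  qed
  moreover have "thr_equiv T xs ys" using thr_equiv_mono[OF R] T by simp
  ultimately show ?thesis using thr_equiv_snocI[OF _ T] by blast
next
  case False
  then show ?thesis using thr_equiv_snoc_far[OF T R] by force
qed

section \<open>The counting chain\<close>

text \<open>The chain is unfolded along the integers: positions up to 0 belong to the initial
  self-loop, positions 1 to K are the states themselves and positions beyond K belong to the
  absorbing state K+1. Every path reads chain_state K (s + t) for a fixed offset s.\<close>

definition chain_state :: "nat \<Rightarrow> int \<Rightarrow> nat" where
  "chain_state K t = (if t \<le> 0 then 0 else if t \<le> int K then nat t else Suc K)"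

definition chain_trace :: "nat \<Rightarrow> int \<Rightarrow> nat \<Rightarrow> nat list" where
  "chain_trace K s n = map (\<lambda>t. chain_state K (s + int t)) [0..<n]"

definition chain_kripke :: "nat \<Rightarrow> nat \<Rightarrow> (nat, 'ap) kripke" where
  "chain_kripke K ini = \<lparr>St = {0..Suc K},
     Tr = {(0, 0), (0, 1)} \<union> {(i, Suc i) | i. 1 \<le> i \<and> i \<le> K} \<union> {(Suc K, Suc K)},
     Lab = (\<lambda>s. if s = Suc K then UNIV else {}), Init = ini\<rparr>"

lemma chain_kripke_simps [simp]:
  "St (chain_kripke K ini) = {0..Suc K}"
  "Tr (chain_kripke K ini) = {(0, 0), (0, 1)} \<union> {(i, Suc i) | i. 1 \<le> i \<and> i \<le> K} \<union> {(Suc K, Suc K)}"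
  "Lab (chain_kripke K ini) = (\<lambda>s. if s = Suc K then UNIV else {})"
  "Init (chain_kripke K ini) = ini"
  by (simp_all add: chain_kripke_def)

lemma finite_chain_kripke: "ini \<le> Suc K \<Longrightarrow> finite_kripke (chain_kripke K ini)"
proof -
  have "\<exists>t. (s, t) \<in> Tr (chain_kripke K ini)" if "s \<le> Suc K" for s
    using that by (cases "s = 0 \<or> s = Suc K") (auto intro: exI[of _ "Suc s"])
  then show "ini \<le> Suc K \<Longrightarrow> ?thesis" unfolding finite_kripke_def wf_kripke_def by auto
qed

lemma chain_state_Tr: "(chain_state K t, chain_state K (t + 1)) \<in> Tr (chain_kripke K ini)"
  by (auto simp: chain_state_def nat_add_distrib)

lemma chain_state_eq_0_iff: "chain_state K t = 0 \<longleftrightarrow> t \<le> 0"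
  by (auto simp: chain_state_def)

lemma chain_state_eq_1_iff: "1 \<le> K \<Longrightarrow> chain_state K t = 1 \<longleftrightarrow> t = 1"
  by (auto simp: chain_state_def)

lemma chain_state_eq_Suc_iff: "chain_state K t = Suc K \<longleftrightarrow> int K + 1 \<le> t"
  by (auto simp: chain_state_def)

lemma chain_state_le_1_iff: "1 \<le> K \<Longrightarrow> chain_state K s \<le> 1 \<longleftrightarrow> s \<le> 1"
  by (auto simp: chain_state_def)

lemma chain_state_of_nat: "i \<le> Suc K \<Longrightarrow> chain_state K (int i) = i"
  by (auto simp: chain_state_def)

lemma length_chain_trace [simp]: "length (chain_trace K s n) = n"
  by (simp add: chain_trace_def)

lemma nth_chain_trace [simp]: "i < n \<Longrightarrow> chain_trace K s n ! i = chain_state K (s + int i)"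
  by (simp add: chain_trace_def)

lemma take_chain_trace: "m \<le> n \<Longrightarrow> take m (chain_trace K s n) = chain_trace K s m"
  by (simp add: chain_trace_def take_map)

lemma drop_chain_trace: "m \<le> n \<Longrightarrow> drop m (chain_trace K s n) = chain_trace K (s + int m) (n - m)"
  by (rule nth_equalityI) (auto simp: algebra_simps)

lemma hd_chain_trace: "1 \<le> n \<Longrightarrow> hd (chain_trace K s n) = chain_state K s"
  by (simp add: hd_conv_nth chain_trace_def)

lemma last_chain_trace: "1 \<le> n \<Longrightarrow> last (chain_trace K s n) = chain_state K (s + int n - 1)"
  by (simp add: last_conv_nth chain_trace_def of_nat_diff add_diff_eq)

lemma chain_trace_above: "int K + 1 \<le> s \<Longrightarrow> chain_trace K s n = replicate n (Suc K)"
  by (rule nth_equalityI) (auto simp: chain_state_def)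

lemma chain_path_offset:
  assumes K: "1 \<le> K" and p: "is_inf_path (chain_kripke K ini :: (nat, 'ap) kripke) \<pi>"
  shows "\<exists>s. \<forall>t\<le>m. \<pi> t = chain_state K (s + int t)"
proof (induction m)
  case 0
  have "(\<pi> 0, \<pi> 1) \<in> Tr (chain_kripke K ini :: (nat, 'ap) kripke)" using p by (simp add: is_inf_path_def)
  then have "\<pi> 0 \<le> Suc K" by auto
  then show ?case by (intro exI[of _ "int (\<pi> 0)"]) (simp add: chain_state_of_nat)
next
  case (Suc m)
  then obtain s where s: "\<forall>t\<le>m. \<pi> t = chain_state K (s + int t)" by blast
  have tr: "(\<pi> m, \<pi> (Suc m)) \<in> Tr (chain_kripke K ini :: (nat, 'ap) kripke)"
    using p by (simp add: is_inf_path_def)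
  have pm: "\<pi> m = chain_state K (s + int m)" using s by simp
  show ?case
  proof (cases "\<pi> m = 0")
    case True
    then have "s + int m \<le> 0" using pm chain_state_eq_0_iff by metis
    then have "\<forall>t\<le>m. \<pi> t = 0" using s by (auto simp: chain_state_def)
    moreover have "\<pi> (Suc m) = 0 \<or> \<pi> (Suc m) = 1" using tr True by auto
    ultimately consider "\<forall>t\<le>Suc m. \<pi> t = chain_state K (- int m - 1 + int t)"
      | "\<forall>t\<le>Suc m. \<pi> t = chain_state K (- int m + int t)"
      by (auto simp: chain_state_def le_Suc_eq)
    then show ?thesis by cases blast+
  next
    case False
    then have "\<pi> m = Suc K \<and> \<pi> (Suc m) = Suc K \<or> 1 \<le> \<pi> m \<and> \<pi> m \<le> K \<and> \<pi> (Suc m) = Suc (\<pi> m)"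
      using tr by auto
    then have "\<pi> (Suc m) = chain_state K (s + int m + 1)"
      using pm by (auto simp: chain_state_def split: if_splits)
    then show ?thesis using s by (intro exI[of _ s]) (auto simp: le_Suc_eq algebra_simps)
  qed
qed

lemma chain_1_path:
  assumes K: "1 \<le> K" and p: "is_inf_path (chain_kripke K 1 :: (nat, 'ap) kripke) \<pi>" and "\<pi> 0 = 1"
  shows "\<pi> t = chain_state K (1 + int t)"
proof -
  obtain s where s: "\<forall>u\<le>t. \<pi> u = chain_state K (s + int u)" using chain_path_offset[OF K p] by blast
  then have "chain_state K s = 1" using \<open>\<pi> 0 = 1\<close> by (metis add.right_neutral of_nat_0 zero_le)
  then have "s = 1" using chain_state_eq_1_iff[OF K] by blast
  then show ?thesis using s by simp
qed

lemma models_lin_chain_1: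
  assumes K: "1 \<le> K"
  shows "models_lin (chain_kripke K 1 :: (nat, 'ap) kripke) (hs_future a)"
  unfolding models_lin_def
proof (intro allI impI)
  let ?M = "chain_kripke K 1 :: (nat, 'ap) kripke"
  fix \<pi> i assume p: "is_inf_path ?M \<pi> \<and> \<pi> 0 = Init ?M"
  have "\<pi> (i + K + 1) = chain_state K (1 + int (i + K + 1))"
    using chain_1_path[OF K conjunct1[OF p]] conjunct2[OF p] by simp
  then have "\<pi> (i + K + 1) = Suc K" by (simp add: chain_state_def)
  then show "sat_lin ?M \<pi> 0 i (hs_future a)"
    unfolding sat_lin_hs_future by (intro exI[of _ "i + K + 1"]) auto
qed

lemma not_models_lin_chain_0: "\<not> models_lin (chain_kripke K 0) (hs_future a)"
proof -
  have "is_inf_path (chain_kripke K 0) (\<lambda>_. 0)" by (simp add: is_inf_path_def)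
  moreover have "\<not> sat_lin (chain_kripke K 0) (\<lambda>_. 0) 0 0 (hs_future a)"
    unfolding sat_lin_hs_future by simp
  ultimately show ?thesis unfolding models_lin_def by force
qed

lemma is_trace_chain_iff:
  assumes K: "1 \<le> K"
  shows "is_trace (chain_kripke K ini :: (nat, 'ap) kripke) \<rho> \<longleftrightarrow> (\<exists>s n. 1 \<le> n \<and> \<rho> = chain_trace K s n)"
proof
  let ?K = "chain_kripke K ini :: (nat, 'ap) kripke"
  assume "is_trace ?K \<rho>"
  then obtain \<pi> where ne: "\<rho> \<noteq> []" and p: "is_inf_path ?K \<pi>"
    and \<rho>: "\<rho> = map \<pi> [0..<length \<rho>]" unfolding is_trace_def by blast
  obtain s where s: "\<forall>t\<le>length \<rho>. \<pi> t = chain_state K (s + int t)"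
    using chain_path_offset[OF K p] by blast
  have "\<rho> = chain_trace K s (length \<rho>)"
  proof (rule nth_equalityI)
    fix i assume "i < length \<rho>"
    then show "\<rho> ! i = chain_trace K s (length \<rho>) ! i" using s by (subst \<rho>) simp
  qed simp
  then show "\<exists>s n. 1 \<le> n \<and> \<rho> = chain_trace K s n" using ne by (cases \<rho>) auto
next
  let ?K = "chain_kripke K ini :: (nat, 'ap) kripke"
  assume "\<exists>s n. 1 \<le> n \<and> \<rho> = chain_trace K s n"
  then obtain s n where n: "1 \<le> n" and \<rho>: "\<rho> = chain_trace K s n" by blast
  have "is_inf_path ?K (\<lambda>t. chain_state K (s + int t))"
    unfolding is_inf_path_def using chain_state_Tr[of K "s + int _" ini] by (simp add: algebra_simps)
  moreover have "\<rho> = map (\<lambda>t. chain_state K (s + int t)) [0..<length \<rho>]"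
    using \<rho> by (simp add: chain_trace_def)
  ultimately show "is_trace ?K \<rho>" using n \<rho> unfolding is_trace_def by auto
qed

lemma is_init_trace_chain_iff:
  "1 \<le> K \<Longrightarrow> is_init_trace (chain_kripke K ini) \<rho> \<longleftrightarrow>
     (\<exists>s n. 1 \<le> n \<and> \<rho> = chain_trace K s n \<and> chain_state K s = ini)"
  unfolding is_init_trace_def is_trace_chain_iff by (auto simp: hd_chain_trace) blast

lemma sat_st_chain_Init_cong:
  "sat_st (chain_kripke K ini) \<rho> \<phi> \<longleftrightarrow> sat_st (chain_kripke K ini') \<rho> \<phi>"
proof (induction \<phi> arbitrary: \<rho>)
  case (Bbar \<phi>)
  then show ?case by (simp add: is_trace_def is_inf_path_def)
next
  case (Ebar \<phi>)
  then show ?case by (simp add: is_trace_def is_inf_path_def)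
qed simp_all

lemma Pref_chain_trace: "Pref (chain_trace K s n) = {chain_trace K s m | m. 1 \<le> m \<and> m < n}"
  unfolding Pref_def by (force simp: take_chain_trace)

lemma Suff_chain_trace:
  "Suff (chain_trace K s n) = {chain_trace K (s + int m) (n - m) | m. 1 \<le> m \<and> m < n}"
  unfolding Suff_def by (force simp: drop_chain_trace)

lemma chain_trace_eq_cases:
  assumes K: "1 \<le> K" and n: "1 \<le> n" and eq: "chain_trace K s0 n = chain_trace K s n"
  shows "s0 = s \<or> (s + int n \<le> 1 \<and> s0 + int n \<le> 1) \<or> (int K + 1 \<le> s \<and> int K + 1 \<le> s0)"
proof -
  have nth: "chain_state K (s0 + int t) = chain_state K (s + int t)" if "t < n" for t
    using eq that by (metis nth_chain_trace)
  show ?thesis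
  proof (cases "\<exists>t<n. 1 \<le> s + int t \<and> s + int t \<le> int K")
    case True
    then obtain t where t: "t < n" "1 \<le> s + int t" "s + int t \<le> int K" by blast
    then have "chain_state K (s0 + int t) = nat (s + int t)"
      using nth[OF t(1)] by (simp add: chain_state_def)
    then show ?thesis using t K by (auto simp: chain_state_def split: if_splits)
  next
    case False
    then have out: "s + int t \<le> 0 \<or> int K + 1 \<le> s + int t" if "t < n" for t using that by force
    show ?thesis
    proof (cases "s \<le> 0")
      case True
      have "s + int n \<le> 1"
      proof (rule ccontr)
        assume "\<not> s + int n \<le> 1"
        then have "nat (1 - s) < n" using True by linarith
        from out[OF this] True K show False by simp
      qed
      moreover have "chain_state K (s0 + int (n - 1)) = 0"
        using nth[of "n - 1"] n \<open>s + int n \<le> 1\<close> by (simp add: chain_state_def of_nat_diff)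
      ultimately show ?thesis using n by (simp add: chain_state_eq_0_iff of_nat_diff)
    next
      case False
      then have "int K + 1 \<le> s" using out[of 0] n by simp
      moreover have "chain_state K s0 = Suc K"
        using nth[of 0] n calculation by (simp add: chain_state_def)
      ultimately show ?thesis by (simp add: chain_state_eq_Suc_iff)
    qed
  qed
qed

section \<open>State-based semantics on the chain\<close>

context
  fixes K :: nat
  assumes K: "1 \<le> K"
begin

lemma is_trace_chain_trace: "1 \<le> n \<Longrightarrow> is_trace (chain_kripke K ini) (chain_trace K s n)"
  using is_trace_chain_iff[OF K] by blast

lemma sat_st_chain_Prop:
  "1 \<le> n \<Longrightarrow> sat_st (chain_kripke K ini) (chain_trace K s n) (Prop p) \<longleftrightarrow> int K + 1 \<le> s"
  by (auto simp: all_set_conv_all_nth chain_state_eq_Suc_iff dest: spec[of _ 0])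

lemma sat_st_chain_Bm:
  "sat_st (chain_kripke K ini) (chain_trace K s n) (Bm \<psi>) \<longleftrightarrow>
     (\<exists>m. 1 \<le> m \<and> m < n \<and> sat_st (chain_kripke K ini) (chain_trace K s m) \<psi>)"
  by (auto simp: Pref_chain_trace)

lemma sat_st_chain_Em:
  "sat_st (chain_kripke K ini) (chain_trace K s n) (Em \<psi>) \<longleftrightarrow>
     (\<exists>m. 1 \<le> m \<and> m < n \<and> sat_st (chain_kripke K ini) (chain_trace K (s + int m) (n - m)) \<psi>)"
  by (auto simp: Suff_chain_trace)

lemma sat_st_chain_Bbar:
  assumes n: "1 \<le> n"
  shows "sat_st (chain_kripke K ini) (chain_trace K s n) (Bbar \<psi>) \<longleftrightarrow>
    (\<exists>s0 m. chain_trace K s0 n = chain_trace K s n \<and> n < m \<and>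
       sat_st (chain_kripke K ini) (chain_trace K s0 m) \<psi>)"
proof
  assume "sat_st (chain_kripke K ini) (chain_trace K s n) (Bbar \<psi>)"
  then obtain s0 m where "chain_trace K s n \<in> Pref (chain_trace K s0 m)"
    and sat: "sat_st (chain_kripke K ini) (chain_trace K s0 m) \<psi>"
    by (auto simp: is_trace_chain_iff[OF K])
  then obtain m' where "1 \<le> m'" "m' < m" "chain_trace K s n = chain_trace K s0 m'"
    by (auto simp: Pref_chain_trace)
  moreover from this have "m' = n" by (metis length_chain_trace)
  ultimately show "\<exists>s0 m. chain_trace K s0 n = chain_trace K s n \<and> n < m \<and>
      sat_st (chain_kripke K ini) (chain_trace K s0 m) \<psi>" using sat by auto
next
  assume "\<exists>s0 m. chain_trace K s0 n = chain_trace K s n \<and> n < m \<and>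
      sat_st (chain_kripke K ini) (chain_trace K s0 m) \<psi>"
  then obtain s0 m where "chain_trace K s0 n = chain_trace K s n" "n < m"
    "sat_st (chain_kripke K ini) (chain_trace K s0 m) \<psi>" by blast
  moreover have "chain_trace K s n \<in> Pref (chain_trace K s0 m)"
    unfolding Pref_chain_trace using calculation n by (intro CollectI exI[of _ n]) auto
  ultimately show "sat_st (chain_kripke K ini) (chain_trace K s n) (Bbar \<psi>)"
    using n is_trace_chain_trace[of m] by auto
qed

lemma sat_st_chain_Ebar:
  assumes n: "1 \<le> n"
  shows "sat_st (chain_kripke K ini) (chain_trace K s n) (Ebar \<psi>) \<longleftrightarrow>
    (\<exists>s0 v m. chain_trace K s0 n = chain_trace K s n \<and> v < s0 \<and> v + int m = s0 + int n \<and>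
       sat_st (chain_kripke K ini) (chain_trace K v m) \<psi>)"
proof
  assume "sat_st (chain_kripke K ini) (chain_trace K s n) (Ebar \<psi>)"
  then obtain v m where "chain_trace K s n \<in> Suff (chain_trace K v m)"
    and sat: "sat_st (chain_kripke K ini) (chain_trace K v m) \<psi>"
    by (auto simp: is_trace_chain_iff[OF K])
  then obtain i where i: "1 \<le> i" "i < m" "chain_trace K s n = chain_trace K (v + int i) (m - i)"
    by (auto simp: Suff_chain_trace)
  moreover from this have "n = m - i" by (metis length_chain_trace)
  ultimately show "\<exists>s0 v m. chain_trace K s0 n = chain_trace K s n \<and> v < s0 \<and>
      v + int m = s0 + int n \<and> sat_st (chain_kripke K ini) (chain_trace K v m) \<psi>"
    using sat by (intro exI[of _ "v + int i"] exI[of _ v] exI[of _ m]) auto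
next
  assume "\<exists>s0 v m. chain_trace K s0 n = chain_trace K s n \<and> v < s0 \<and> v + int m = s0 + int n \<and>
      sat_st (chain_kripke K ini) (chain_trace K v m) \<psi>"
  then obtain s0 v m where eq: "chain_trace K s0 n = chain_trace K s n" and "v < s0"
    and vm: "v + int m = s0 + int n" and sat: "sat_st (chain_kripke K ini) (chain_trace K v m) \<psi>"
    by blast
  define i where "i = nat (s0 - v)"
  have i: "1 \<le> i" "i < m" "s0 = v + int i" "n = m - i" using \<open>v < s0\<close> vm n unfolding i_def by auto
  have "chain_trace K s n \<in> Suff (chain_trace K v m)"
    unfolding Suff_chain_trace using eq i by (intro CollectI exI[of _ i]) auto
  then show "sat_st (chain_kripke K ini) (chain_trace K s n) (Ebar \<psi>)"
    using sat i is_trace_chain_trace[of m] by auto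
qed

end

text \<open>A trace chain_trace K s n is summarised by the positions of its endpoints relative to
  the first position K+1 of the labelled sink. The invariant of the Ehrenfeucht-Fraisse argument
  is that formulas cannot separate traces with T-equivalent summaries.\<close>

definition st_profile :: "nat \<Rightarrow> int \<Rightarrow> nat \<Rightarrow> int list" where
  "st_profile K s n = [int K + 1, s, s + int n]"

definition st_preserves :: "nat \<Rightarrow> int \<Rightarrow> 'ap hs \<Rightarrow> bool" where
  "st_preserves K T \<psi> \<longleftrightarrow> (\<forall>s n s' n'. 1 \<le> n \<longrightarrow> 1 \<le> n' \<longrightarrow>
     thr_equiv T (st_profile K s n) (st_profile K s' n') \<longrightarrow>
     sat_st (chain_kripke K 0) (chain_trace K s n) \<psi> \<longrightarrow> sat_st (chain_kripke K 0) (chain_trace K s' n') \<psi>)"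

lemma st_preservesD:
  "st_preserves K T \<psi> \<Longrightarrow> 1 \<le> n \<Longrightarrow> 1 \<le> n' \<Longrightarrow>
    thr_equiv T (st_profile K s n) (st_profile K s' n') \<Longrightarrow>
    sat_st (chain_kripke K 0) (chain_trace K s n) \<psi> \<Longrightarrow> sat_st (chain_kripke K 0) (chain_trace K s' n') \<psi>"
  unfolding st_preserves_def by blast

context
  fixes K :: nat
  assumes K: "1 \<le> K"
begin

lemma st_profile_shift:
  assumes T: "0 < T" "T \<le> int K" and n: "1 \<le> n" "1 \<le> n'"
    and R: "thr_equiv T (st_profile K s n) (st_profile K s' n')"
    and eq: "chain_trace K s0 n = chain_trace K s n"
  obtains s0' where "chain_trace K s0' n' = chain_trace K s' n'"
    "thr_equiv T (st_profile K s0 n) (st_profile K s0' n')"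
proof -
  have R3: "thr_eq T (s - (int K + 1)) (s' - (int K + 1))"
    "thr_eq T (s + int n - (int K + 1)) (s' + int n' - (int K + 1))" "thr_eq T (int n) (int n')"
    using R by (simp_all add: st_profile_def thr_equiv3)
  from chain_trace_eq_cases[OF K n(1) eq] consider "s0 = s" | "s + int n \<le> 1 \<and> s0 + int n \<le> 1"
    | "int K + 1 \<le> s \<and> int K + 1 \<le> s0" by blast
  then show ?thesis
  proof cases
    case 1 then show ?thesis using R that by blast
  next
    case 2
    then have "s' + int n' - (int K + 1) \<le> -T" using R3(2) T by (auto simp: thr_eq_def)
    then have "thr_equiv T (st_profile K s0 n) (st_profile K s' n')"
      using R3(3) 2 T n by (auto simp: st_profile_def thr_equiv3 thr_eq_def)
    then show ?thesis using that by blast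
  next
    case 3
    then have "int K + 1 \<le> s'" using thr_eq_sign(2)[OF T(1) R3(1)] by simp
    then have "chain_trace K s0 n' = chain_trace K s' n'" using 3 by (simp add: chain_trace_above)
    moreover have "thr_equiv T (st_profile K s0 n) (st_profile K s0 n')"
      using R3(3) 3 T n by (auto simp: st_profile_def thr_equiv3 thr_eq_def)
    ultimately show ?thesis using that by blast
  qed
qed

lemma st_preserves_mono: "st_preserves K T \<psi> \<Longrightarrow> T \<le> T' \<Longrightarrow> st_preserves K T' \<psi>"
  unfolding st_preserves_def using thr_equiv_mono by blast

lemma st_preserves_Prop:
  assumes T: "0 < T"
  shows "st_preserves K T (Prop p)"
  unfolding st_preserves_def
proof (intro allI impI)
  fix s n s' n'
  assume n: "1 \<le> n" "1 \<le> n'" and R: "thr_equiv T (st_profile K s n) (st_profile K s' n')"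
    and sat: "sat_st (chain_kripke K 0) (chain_trace K s n) (Prop p)"
  have R2: "thr_equiv T [int K + 1, s] [int K + 1, s']"
    using thr_equiv_pair[OF R, of 0 1] by (simp add: st_profile_def)
  have "int K + 1 \<le> s" using sat_st_chain_Prop[OF K n(1)] sat by (rule iffD1)
  then have "int K + 1 \<le> s'" using thr_equiv_pair_le_iff[OF T R2] by simp
  with sat_st_chain_Prop[OF K n(2)]
  show "sat_st (chain_kripke K 0) (chain_trace K s' n') (Prop p)" by (rule iffD2)
qed

lemma st_preserves_Neg: "st_preserves K T \<psi> \<Longrightarrow> st_preserves K T (Neg \<psi>)"
  unfolding st_preserves_def sat_st.simps(2) using thr_equiv_sym by blast

lemma st_preserves_And: "st_preserves K T \<psi> \<Longrightarrow> st_preserves K T \<chi> \<Longrightarrow> st_preserves K T (And \<psi> \<chi>)"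
  unfolding st_preserves_def by auto

lemma st_preserves_Bm:
  assumes T: "0 < T" and IH: "st_preserves K T \<psi>"
  shows "st_preserves K (2 * T) (Bm \<psi>)"
  unfolding st_preserves_def
proof (intro allI impI)
  fix s n s' n'
  assume n: "1 \<le> n" "1 \<le> n'" and R: "thr_equiv (2 * T) (st_profile K s n) (st_profile K s' n')"
    and "sat_st (chain_kripke K 0) (chain_trace K s n) (Bm \<psi>)"
  then obtain m where m: "1 \<le> m" "m < n" and sat: "sat_st (chain_kripke K 0) (chain_trace K s m) \<psi>"
    unfolding sat_st_chain_Bm[OF K] by blast
  obtain y where Y: "thr_equiv T [int K + 1, s, s + int n, s + int m] [int K + 1, s', s' + int n', y]"
    using thr_equiv_snoc[OF T R, of "s + int m"] by (auto simp: st_profile_def)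
  have "s' < y" using thr_equiv_pair_less_iff[OF T thr_equiv_map_nth[OF Y, of "[1, 3]", simplified]] m
    by simp
  moreover have "y < s' + int n'"
    using thr_equiv_pair_less_iff[OF T thr_equiv_map_nth[OF Y, of "[3, 2]", simplified]] m by simp
  ultimately obtain m' where m': "1 \<le> m'" "m' < n'" "y = s' + int m'"
    by (intro that[of "nat (y - s')"]) auto
  have "thr_equiv T (st_profile K s m) (st_profile K s' m')"
    using thr_equiv_map_nth[OF Y, of "[0, 1, 3]"] m'(3) by (simp add: st_profile_def)
  from st_preservesD[OF IH m(1) m'(1) this sat]
  have "sat_st (chain_kripke K 0) (chain_trace K s' m') \<psi>" .
  then show "sat_st (chain_kripke K 0) (chain_trace K s' n') (Bm \<psi>)"
    unfolding sat_st_chain_Bm[OF K] using m' by blast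
qed

lemma st_preserves_Em:
  assumes T: "0 < T" and IH: "st_preserves K T \<psi>"
  shows "st_preserves K (2 * T) (Em \<psi>)"
  unfolding st_preserves_def
proof (intro allI impI)
  fix s n s' n'
  assume n: "1 \<le> n" "1 \<le> n'" and R: "thr_equiv (2 * T) (st_profile K s n) (st_profile K s' n')"
    and "sat_st (chain_kripke K 0) (chain_trace K s n) (Em \<psi>)"
  then obtain m where m: "1 \<le> m" "m < n"
    and sat: "sat_st (chain_kripke K 0) (chain_trace K (s + int m) (n - m)) \<psi>"
    unfolding sat_st_chain_Em[OF K] by blast
  obtain y where Y: "thr_equiv T [int K + 1, s, s + int n, s + int m] [int K + 1, s', s' + int n', y]"
    using thr_equiv_snoc[OF T R, of "s + int m"] by (auto simp: st_profile_def)
  have "s' < y" using thr_equiv_pair_less_iff[OF T thr_equiv_map_nth[OF Y, of "[1, 3]", simplified]] m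
    by simp
  moreover have "y < s' + int n'"
    using thr_equiv_pair_less_iff[OF T thr_equiv_map_nth[OF Y, of "[3, 2]", simplified]] m by simp
  ultimately obtain m' where m': "1 \<le> m'" "m' < n'" "y = s' + int m'"
    by (intro that[of "nat (y - s')"]) auto
  have "thr_equiv T (st_profile K (s + int m) (n - m)) (st_profile K (s' + int m') (n' - m'))"
    using thr_equiv_map_nth[OF Y, of "[0, 3, 2]"] m m'(2,3) by (simp add: st_profile_def of_nat_diff)
  from st_preservesD[OF IH _ _ this sat] m m'
  have "sat_st (chain_kripke K 0) (chain_trace K (s' + int m') (n' - m')) \<psi>" by simp
  then show "sat_st (chain_kripke K 0) (chain_trace K s' n') (Em \<psi>)"
    unfolding sat_st_chain_Em[OF K] using m' by blast
qed

lemma st_preserves_Bbar: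
  assumes T: "0 < T" "2 * T \<le> int K" and IH: "st_preserves K T \<psi>"
  shows "st_preserves K (2 * T) (Bbar \<psi>)"
  unfolding st_preserves_def
proof (intro allI impI)
  fix s n s' n'
  assume n: "1 \<le> n" "1 \<le> n'" and R: "thr_equiv (2 * T) (st_profile K s n) (st_profile K s' n')"
    and "sat_st (chain_kripke K 0) (chain_trace K s n) (Bbar \<psi>)"
  then obtain s0 m where eq: "chain_trace K s0 n = chain_trace K s n" and m: "n < m"
    and sat: "sat_st (chain_kripke K 0) (chain_trace K s0 m) \<psi>"
    unfolding sat_st_chain_Bbar[OF K n(1)] by blast
  obtain s0' where eq': "chain_trace K s0' n' = chain_trace K s' n'"
    and R0: "thr_equiv (2 * T) (st_profile K s0 n) (st_profile K s0' n')"
    using st_profile_shift[OF _ T(2) n R eq] T(1) by auto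
  obtain y where Y: "thr_equiv T [int K + 1, s0, s0 + int n, s0 + int m]
      [int K + 1, s0', s0' + int n', y]"
    using thr_equiv_snoc[OF T(1) R0, of "s0 + int m"] by (auto simp: st_profile_def)
  have "s0' + int n' < y"
    using thr_equiv_pair_less_iff[OF T(1) thr_equiv_map_nth[OF Y, of "[2, 3]", simplified]] m by simp
  then obtain m' where m': "n' < m'" "y = s0' + int m'"
    by (intro that[of "nat (y - s0')"]) auto
  have "thr_equiv T (st_profile K s0 m) (st_profile K s0' m')"
    using thr_equiv_map_nth[OF Y, of "[0, 1, 3]"] m'(2) by (simp add: st_profile_def)
  from st_preservesD[OF IH _ _ this sat] n m m'
  have "sat_st (chain_kripke K 0) (chain_trace K s0' m') \<psi>" by simp
  then show "sat_st (chain_kripke K 0) (chain_trace K s' n') (Bbar \<psi>)"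
    unfolding sat_st_chain_Bbar[OF K n(2)] using eq' m' by blast
qed

lemma st_preserves_Ebar:
  assumes T: "0 < T" "2 * T \<le> int K" and IH: "st_preserves K T \<psi>"
  shows "st_preserves K (2 * T) (Ebar \<psi>)"
  unfolding st_preserves_def
proof (intro allI impI)
  fix s n s' n'
  assume n: "1 \<le> n" "1 \<le> n'" and R: "thr_equiv (2 * T) (st_profile K s n) (st_profile K s' n')"
    and "sat_st (chain_kripke K 0) (chain_trace K s n) (Ebar \<psi>)"
  then obtain s0 v m where eq: "chain_trace K s0 n = chain_trace K s n" and v: "v < s0"
    and vm: "v + int m = s0 + int n" and sat: "sat_st (chain_kripke K 0) (chain_trace K v m) \<psi>"
    unfolding sat_st_chain_Ebar[OF K n(1)] by blast
  obtain s0' where eq': "chain_trace K s0' n' = chain_trace K s' n'"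
    and R0: "thr_equiv (2 * T) (st_profile K s0 n) (st_profile K s0' n')"
    using st_profile_shift[OF _ T(2) n R eq] T(1) by auto
  obtain y where Y: "thr_equiv T [int K + 1, s0, s0 + int n, v] [int K + 1, s0', s0' + int n', y]"
    using thr_equiv_snoc[OF T(1) R0, of v] by (auto simp: st_profile_def)
  have "y < s0'"
    using thr_equiv_pair_less_iff[OF T(1) thr_equiv_map_nth[OF Y, of "[3, 1]", simplified]] v by simp
  then obtain m' where m': "1 \<le> m'" "y + int m' = s0' + int n'"
    using n(2) by (intro that[of "nat (s0' + int n' - y)"]) auto
  have "thr_equiv T (st_profile K v m) (st_profile K y m')"
    using thr_equiv_map_nth[OF Y, of "[0, 3, 2]"] vm m'(2) by (simp add: st_profile_def)
  moreover have "1 \<le> m" using vm v n(1) by linarith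
  ultimately have "sat_st (chain_kripke K 0) (chain_trace K y m') \<psi>"
    using st_preservesD[OF IH _ m'(1) _ sat] by blast
  then show "sat_st (chain_kripke K 0) (chain_trace K s' n') (Ebar \<psi>)"
    unfolding sat_st_chain_Ebar[OF K n(2)] using eq' m' \<open>y < s0'\<close> by blast
qed

lemma st_preserves_height: "2 ^ hs_height \<psi> \<le> int K \<Longrightarrow> st_preserves K (2 ^ hs_height \<psi>) \<psi>"
proof (induction \<psi>)
  have half: "2 ^ h \<le> int K" if "2 * 2 ^ h \<le> int K" for h :: nat
    using that zero_less_power[of "2::int" h] by linarith
  {
    case (Prop p)
    then show ?case by (simp add: st_preserves_Prop)
  next
    case (Neg \<psi>)
    then show ?case by (simp add: st_preserves_Neg)
  next
    case (And \<psi> \<chi>)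
    have "(2::int) ^ hs_height \<psi> \<le> 2 ^ hs_height (And \<psi> \<chi>)"
      "(2::int) ^ hs_height \<chi> \<le> 2 ^ hs_height (And \<psi> \<chi>)"
      by (simp_all add: power_increasing)
    then show ?case using And st_preserves_mono st_preserves_And by (meson order_trans)
  next
    case (Bm \<psi>)
    then have "st_preserves K (2 ^ hs_height \<psi>) \<psi>" using half by simp
    with Bm.prems show ?case using st_preserves_Bm[of "2 ^ hs_height \<psi>"] by simp
  next
    case (Em \<psi>)
    then have "st_preserves K (2 ^ hs_height \<psi>) \<psi>" using half by simp
    with Em.prems show ?case using st_preserves_Em[of "2 ^ hs_height \<psi>"] by simp
  next
    case (Bbar \<psi>)
    then have "st_preserves K (2 ^ hs_height \<psi>) \<psi>" using half by simp
    with Bbar.prems show ?case using st_preserves_Bbar[of "2 ^ hs_height \<psi>"] by simp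
  next
    case (Ebar \<psi>)
    then have "st_preserves K (2 ^ hs_height \<psi>) \<psi>" using half by simp
    with Ebar.prems show ?case using st_preserves_Ebar[of "2 ^ hs_height \<psi>"] by simp
  }
qed

end

lemma equiv_profile_from_0:
  assumes T: "0 < T" "2 * T \<le> int K" and n: "1 \<le> n"
  obtains s' n' where "s' \<le> 0" "1 \<le> n'" "thr_equiv T (st_profile K 1 n) (st_profile K s' n')"
proof (cases "1 + int n \<le> int K + 1 - T")
  case True
  then have "thr_equiv T (st_profile K 1 n) (st_profile K 0 n)"
    using T by (auto simp: st_profile_def thr_equiv3 thr_eq_def)
  then show ?thesis using n by (intro that[of 0 n]) simp_all
next
  case False
  then have "thr_equiv T (st_profile K 1 n) (st_profile K 0 (n + 1))"
    using T by (auto simp: st_profile_def thr_equiv3 thr_eq_def)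
  then show ?thesis by (intro that[of 0 "n + 1"]) simp_all
qed

lemma equiv_profile_from_1:
  assumes T: "0 < T" "2 * T \<le> int K" and n': "1 \<le> n'" "s' \<le> 0"
  obtains n where "1 \<le> n" "thr_equiv T (st_profile K 1 n) (st_profile K s' n')"
proof (cases "s' + int n' \<le> int K + 1 - T")
  case True
  then have "thr_equiv T (st_profile K 1 (min n' (nat T))) (st_profile K s' n')"
    using T n' by (auto simp: st_profile_def thr_equiv3 thr_eq_def)
  then show ?thesis using n' T by (intro that[of "min n' (nat T)"]) auto
next
  case False
  then have "thr_equiv T (st_profile K 1 (nat (s' + int n' - 1))) (st_profile K s' n')"
    using T n' by (auto simp: st_profile_def thr_equiv3 thr_eq_def)
  then show ?thesis using T False by (intro that[of "nat (s' + int n' - 1)"]) auto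
qed

section \<open>Computation-tree semantics on the chain\<close>

definition chain_ct_trace :: "nat \<Rightarrow> int \<Rightarrow> nat \<Rightarrow> nat \<Rightarrow> nat list list" where
  "chain_ct_trace K s a b = map (chain_trace K s) [a..<b]"

lemma length_chain_ct_trace [simp]: "length (chain_ct_trace K s a b) = b - a"
  by (simp add: chain_ct_trace_def)

lemma nth_chain_ct_trace: "i < b - a \<Longrightarrow> chain_ct_trace K s a b ! i = chain_trace K s (a + i)"
  by (simp add: chain_ct_trace_def)

lemma take_chain_ct_trace: "i \<le> b - a \<Longrightarrow> take i (chain_ct_trace K s a b) = chain_ct_trace K s a (a + i)"
  by (cases "a \<le> b") (auto simp: chain_ct_trace_def take_map take_upt)

lemma drop_chain_ct_trace: "drop i (chain_ct_trace K s a b) = chain_ct_trace K s (a + i) b"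
  by (simp add: chain_ct_trace_def drop_map)

lemma chain_ct_trace_eq_prefixes_from:
  "a < b \<Longrightarrow> chain_ct_trace K s a b = prefixes_from a (chain_trace K s (b - 1))"
  unfolding chain_ct_trace_def prefixes_from_def by (intro map_cong) (auto simp: take_chain_trace)

lemma is_trace_comp_tree_chain_iff:
  assumes K: "1 \<le> K"
  shows "is_trace (comp_tree (chain_kripke K ini)) \<rho> \<longleftrightarrow>
    (\<exists>s a b. chain_state K s = ini \<and> 1 \<le> a \<and> a < b \<and> \<rho> = chain_ct_trace K s a b)"
  unfolding is_trace_comp_tree_iff is_init_trace_chain_iff[OF K]
proof safe
  fix s :: int and n k :: nat assume "1 \<le> n" "1 \<le> k" "k \<le> length (chain_trace K s n)"
  then show "\<exists>s' a b. chain_state K s' = chain_state K s \<and> 1 \<le> a \<and> a < b \<and>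
      prefixes_from k (chain_trace K s n) = chain_ct_trace K s' a b"
    by (intro exI[of _ s] exI[of _ k] exI[of _ "Suc n"]) (simp add: chain_ct_trace_eq_prefixes_from)
next
  fix s :: int and a b :: nat assume ab: "1 \<le> a" "a < b"
  then have "\<exists>s' n. 1 \<le> n \<and> chain_trace K s (b - 1) = chain_trace K s' n \<and>
      chain_state K s' = chain_state K s"
    by (intro exI[of _ s] exI[of _ "b - 1"]) simp
  with ab show "\<exists>h k. (\<exists>s' n. 1 \<le> n \<and> h = chain_trace K s' n \<and> chain_state K s' = chain_state K s) \<and>
      1 \<le> k \<and> k \<le> length h \<and> chain_ct_trace K s a b = prefixes_from k h"
    by (intro exI[of _ "chain_trace K s (b - 1)"] exI[of _ a])
      (simp add: chain_ct_trace_eq_prefixes_from)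
qed

lemma is_init_trace_comp_tree_chain_iff:
  assumes K: "1 \<le> K"
  shows "is_init_trace (comp_tree (chain_kripke K ini)) \<rho> \<longleftrightarrow>
    (\<exists>s b. chain_state K s = ini \<and> 1 < b \<and> \<rho> = chain_ct_trace K s 1 b)"
  unfolding is_init_trace_comp_tree_iff is_init_trace_chain_iff[OF K]
proof safe
  fix s :: int and n :: nat assume "1 \<le> n"
  then show "\<exists>s' b. chain_state K s' = chain_state K s \<and> 1 < b \<and>
      prefixes_from 1 (chain_trace K s n) = chain_ct_trace K s' 1 b"
    by (intro exI[of _ s] exI[of _ "Suc n"]) (simp add: chain_ct_trace_eq_prefixes_from)
next
  fix s :: int and b :: nat assume b: "1 < b"
  then have "\<exists>s' n. 1 \<le> n \<and> chain_trace K s (b - 1) = chain_trace K s' n \<and>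
      chain_state K s' = chain_state K s"
    by (intro exI[of _ s] exI[of _ "b - 1"]) simp
  with b show "\<exists>h. (\<exists>s' n. 1 \<le> n \<and> h = chain_trace K s' n \<and> chain_state K s' = chain_state K s) \<and>
      chain_ct_trace K s 1 b = prefixes_from 1 h"
    by (intro exI[of _ "chain_trace K s (b - 1)"]) (simp add: chain_ct_trace_eq_prefixes_from)
qed

lemma Pref_chain_ct_trace:
  assumes "a < b"
  shows "Pref (chain_ct_trace K s a b) = {chain_ct_trace K s a c | c. a < c \<and> c < b}"
proof (intro set_eqI iffI)
  fix x assume "x \<in> Pref (chain_ct_trace K s a b)"
  then obtain i where "x = take i (chain_ct_trace K s a b)" "1 \<le> i" "i < b - a" by (auto simp: Pref_def)
  then show "x \<in> {chain_ct_trace K s a c | c. a < c \<and> c < b}"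
    by (intro CollectI exI[of _ "a + i"]) (auto simp: take_chain_ct_trace)
next
  fix x assume "x \<in> {chain_ct_trace K s a c | c. a < c \<and> c < b}"
  then obtain c where "x = chain_ct_trace K s a c" "a < c" "c < b" by blast
  then show "x \<in> Pref (chain_ct_trace K s a b)" unfolding Pref_def
    by (intro CollectI exI[of _ "c - a"]) (auto simp: take_chain_ct_trace)
qed

lemma Suff_chain_ct_trace: "Suff (chain_ct_trace K s a b) = {chain_ct_trace K s c b | c. a < c \<and> c < b}"
proof (intro set_eqI iffI)
  fix x assume "x \<in> Suff (chain_ct_trace K s a b)"
  then obtain i where "x = drop i (chain_ct_trace K s a b)" "1 \<le> i" "i < b - a" by (auto simp: Suff_def)
  then show "x \<in> {chain_ct_trace K s c b | c. a < c \<and> c < b}"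
    by (intro CollectI exI[of _ "a + i"]) (auto simp: drop_chain_ct_trace)
next
  fix x assume "x \<in> {chain_ct_trace K s c b | c. a < c \<and> c < b}"
  then obtain c where "x = chain_ct_trace K s c b" "a < c" "c < b" by blast
  then show "x \<in> Suff (chain_ct_trace K s a b)" unfolding Suff_def
    by (intro CollectI exI[of _ "c - a"]) (auto simp: drop_chain_ct_trace)
qed

lemma chain_ct_trace_eqD:
  assumes "a < b" "a' < b'" and eq: "chain_ct_trace K s a b = chain_ct_trace K s' a' b'"
  shows "a' = a" "b' = b" "chain_trace K s' (b - 1) = chain_trace K s (b - 1)"
proof -
  have "b - a = b' - a'" using arg_cong[OF eq, of length] by simp
  moreover have "chain_trace K s a = chain_trace K s' a'"
    using eq nth_chain_ct_trace[of 0 b a K s] nth_chain_ct_trace[of 0 b' a' K s'] assms by simp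
  then show a: "a' = a" by (metis length_chain_trace)
  ultimately show b: "b' = b" using assms by simp
  have i: "b - a - 1 < b - a" "a + (b - a - 1) = b - 1" using assms by auto
  have "chain_ct_trace K s a b ! (b - a - 1) = chain_ct_trace K s' a' b' ! (b - a - 1)" using eq by simp
  then show "chain_trace K s' (b - 1) = chain_trace K s (b - 1)"
    using nth_chain_ct_trace[OF i(1), of K s] nth_chain_ct_trace[OF i(1), of K s'] a b i(2) by simp
qed

lemma chain_ct_trace_cong:
  "chain_trace K s0 (b - 1) = chain_trace K s (b - 1) \<Longrightarrow> chain_ct_trace K s0 a b = chain_ct_trace K s a b"
  unfolding chain_ct_trace_def
proof (rule map_cong)
  fix j assume eq: "chain_trace K s0 (b - 1) = chain_trace K s (b - 1)" and "j \<in> set [a..<b]"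
  then have "j \<le> b - 1" by auto
  then show "chain_trace K s0 j = chain_trace K s j"
    by (metis eq take_chain_trace)
qed simp

context
  fixes K :: nat
  assumes K: "1 \<le> K"
begin

lemma is_trace_comp_tree_chain:
  "chain_state K s = ini \<Longrightarrow> 1 \<le> a \<Longrightarrow> a < b \<Longrightarrow>
    is_trace (comp_tree (chain_kripke K ini)) (chain_ct_trace K s a b)"
  using is_trace_comp_tree_chain_iff[OF K] by blast

lemma sat_ct_chain_Prop:
  assumes "1 \<le> a" "a < b"
  shows "sat_st (comp_tree (chain_kripke K ini)) (chain_ct_trace K s a b) (Prop p) \<longleftrightarrow>
    int K + 1 \<le> s + int a - 1"
proof -
  have "sat_st (comp_tree (chain_kripke K ini)) (chain_ct_trace K s a b) (Prop p) \<longleftrightarrow>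
      (\<forall>j\<in>{a..<b}. int K + 1 \<le> s + int j - 1)"
    using assms by (auto simp: chain_ct_trace_def last_chain_trace chain_state_eq_Suc_iff)
  also have "\<dots> \<longleftrightarrow> int K + 1 \<le> s + int a - 1" using assms by auto
  finally show ?thesis .
qed

lemma sat_ct_chain_Bm:
  "a < b \<Longrightarrow> sat_st (comp_tree (chain_kripke K ini)) (chain_ct_trace K s a b) (Bm \<psi>) \<longleftrightarrow>
    (\<exists>c. a < c \<and> c < b \<and> sat_st (comp_tree (chain_kripke K ini)) (chain_ct_trace K s a c) \<psi>)"
  by (auto simp: Pref_chain_ct_trace)

lemma sat_ct_chain_Em:
  "sat_st (comp_tree (chain_kripke K ini)) (chain_ct_trace K s a b) (Em \<psi>) \<longleftrightarrow>
    (\<exists>c. a < c \<and> c < b \<and> sat_st (comp_tree (chain_kripke K ini)) (chain_ct_trace K s c b) \<psi>)"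
  by (auto simp: Suff_chain_ct_trace)

lemma sat_ct_chain_Bbar:
  assumes ab: "1 \<le> a" "a < b"
  shows "sat_st (comp_tree (chain_kripke K ini)) (chain_ct_trace K s a b) (Bbar \<psi>) \<longleftrightarrow>
    (\<exists>s0 d. chain_state K s0 = ini \<and> chain_trace K s0 (b - 1) = chain_trace K s (b - 1) \<and> b < d \<and>
       sat_st (comp_tree (chain_kripke K ini)) (chain_ct_trace K s0 a d) \<psi>)"
  (is "?lhs \<longleftrightarrow> ?rhs")
proof
  assume ?lhs
  then obtain s0 a0 d c where s0: "chain_state K s0 = ini" "a0 < d" "a0 < c" "c < d"
    and eq: "chain_ct_trace K s a b = chain_ct_trace K s0 a0 c"
    and sat: "sat_st (comp_tree (chain_kripke K ini)) (chain_ct_trace K s0 a0 d) \<psi>"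
    by (auto simp: is_trace_comp_tree_chain_iff[OF K] Pref_chain_ct_trace)
  with chain_ct_trace_eqD[OF ab(2) s0(3) eq] show ?rhs by auto
next
  assume ?rhs
  then obtain s0 d where s0: "chain_state K s0 = ini" "b < d"
    and eq: "chain_trace K s0 (b - 1) = chain_trace K s (b - 1)"
    and sat: "sat_st (comp_tree (chain_kripke K ini)) (chain_ct_trace K s0 a d) \<psi>" by blast
  have "a < d" using ab s0 by simp
  then have "chain_ct_trace K s a b \<in> Pref (chain_ct_trace K s0 a d)"
    unfolding Pref_chain_ct_trace[OF \<open>a < d\<close>] using ab s0 chain_ct_trace_cong[OF eq, of a]
    by (intro CollectI exI[of _ b]) auto
  moreover have "is_trace (comp_tree (chain_kripke K ini)) (chain_ct_trace K s0 a d)"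
    using is_trace_comp_tree_chain[OF s0(1) ab(1) \<open>a < d\<close>] .
  ultimately show ?lhs using sat by auto
qed

lemma sat_ct_chain_Ebar:
  assumes ab: "1 \<le> a" "a < b"
  shows "sat_st (comp_tree (chain_kripke K ini)) (chain_ct_trace K s a b) (Ebar \<psi>) \<longleftrightarrow>
    (\<exists>s0 v. chain_state K s0 = ini \<and> chain_trace K s0 (b - 1) = chain_trace K s (b - 1) \<and>
       1 \<le> v \<and> v < a \<and> sat_st (comp_tree (chain_kripke K ini)) (chain_ct_trace K s0 v b) \<psi>)"
  (is "?lhs \<longleftrightarrow> ?rhs")
proof
  assume ?lhs
  then obtain s0 v d c where s0: "chain_state K s0 = ini" "1 \<le> v" "v < c" "c < d"
    and eq: "chain_ct_trace K s a b = chain_ct_trace K s0 c d"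
    and sat: "sat_st (comp_tree (chain_kripke K ini)) (chain_ct_trace K s0 v d) \<psi>"
    by (auto simp: is_trace_comp_tree_chain_iff[OF K] Suff_chain_ct_trace)
  with chain_ct_trace_eqD[OF ab(2) s0(4) eq] show ?rhs by auto
next
  assume ?rhs
  then obtain s0 v where s0: "chain_state K s0 = ini" "1 \<le> v" "v < a"
    and eq: "chain_trace K s0 (b - 1) = chain_trace K s (b - 1)"
    and sat: "sat_st (comp_tree (chain_kripke K ini)) (chain_ct_trace K s0 v b) \<psi>" by blast
  have "chain_ct_trace K s a b \<in> Suff (chain_ct_trace K s0 v b)"
    unfolding Suff_chain_ct_trace using ab s0 chain_ct_trace_cong[OF eq, of a]
    by (intro CollectI exI[of _ a]) auto
  moreover have "v < b" using s0 ab by simp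
  then have "is_trace (comp_tree (chain_kripke K ini)) (chain_ct_trace K s0 v b)"
    using is_trace_comp_tree_chain[OF s0(1,2)] by blast
  ultimately show ?lhs using sat by auto
qed

end

text \<open>A trace of the computation tree of the chain entered at state 0 or 1 consists of the
  prefixes of lengths a to b - 1 of an initial path with offset s \<le> 1; it is summarised by s
  and the end positions of its first and last prefix.\<close>

definition ct_profile :: "nat \<Rightarrow> int \<Rightarrow> nat \<Rightarrow> nat \<Rightarrow> int list" where
  "ct_profile K s a b = [int K + 1, s, s + int a - 1, s + int b - 1]"

definition ct_preserves :: "nat \<Rightarrow> int \<Rightarrow> 'ap hs \<Rightarrow> bool" where
  "ct_preserves K T \<psi> \<longleftrightarrow> (\<forall>s a b s' a' b'. s \<le> 1 \<longrightarrow> s' \<le> 1 \<longrightarrow> 1 \<le> a \<longrightarrow> a < b \<longrightarrow> 1 \<le> a' \<longrightarrow> a' < b' \<longrightarrow>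
     thr_equiv T (ct_profile K s a b) (ct_profile K s' a' b') \<longrightarrow>
     sat_st (comp_tree (chain_kripke K (chain_state K s))) (chain_ct_trace K s a b) \<psi> \<longrightarrow>
     sat_st (comp_tree (chain_kripke K (chain_state K s'))) (chain_ct_trace K s' a' b') \<psi>)"

lemma ct_preservesD:
  "ct_preserves K T \<psi> \<Longrightarrow> s \<le> 1 \<Longrightarrow> s' \<le> 1 \<Longrightarrow> 1 \<le> a \<Longrightarrow> a < b \<Longrightarrow> 1 \<le> a' \<Longrightarrow> a' < b' \<Longrightarrow>
    thr_equiv T (ct_profile K s a b) (ct_profile K s' a' b') \<Longrightarrow>
    sat_st (comp_tree (chain_kripke K (chain_state K s))) (chain_ct_trace K s a b) \<psi> \<Longrightarrow>
    sat_st (comp_tree (chain_kripke K (chain_state K s'))) (chain_ct_trace K s' a' b') \<psi>"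
  unfolding ct_preserves_def by blast

context
  fixes K :: nat
  assumes K: "1 \<le> K"
begin

lemma ct_profile_shift:
  assumes T: "0 < T" "T \<le> int K" and ab: "1 \<le> a" "a < b" "1 \<le> a'" "a' < b'" and s: "s \<le> 1"
    and R: "thr_equiv T (ct_profile K s a b) (ct_profile K s' a' b')"
    and eq: "chain_trace K s0 (b - 1) = chain_trace K s (b - 1)"
  shows "thr_equiv T (ct_profile K s0 a b) (ct_profile K s' a' b')"
proof -
  have b1: "1 \<le> b - 1" using ab by simp
  have "\<not> int K + 1 \<le> s" using s K by simp
  with chain_trace_eq_cases[OF K b1 eq]
  have "s0 = s \<or> s + int (b - 1) \<le> 1 \<and> s0 + int (b - 1) \<le> 1" by blast
  then show ?thesis
  proof
    assume "s0 = s"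
    then show ?thesis using R by simp
  next
    assume low: "s + int (b - 1) \<le> 1 \<and> s0 + int (b - 1) \<le> 1"
    have R4: "thr_eq T (s + int b - 1 - (int K + 1)) (s' + int b' - 1 - (int K + 1))"
       "thr_eq T (s + int a - 1 - s) (s' + int a' - 1 - s')"
       "thr_eq T (s + int b - 1 - s) (s' + int b' - 1 - s')"
       "thr_eq T (s + int b - 1 - (s + int a - 1)) (s' + int b' - 1 - (s' + int a' - 1))"
      using R unfolding ct_profile_def thr_equiv4 by simp_all
    have "s + int b - 1 - (int K + 1) \<le> -T" using low T ab by (simp add: of_nat_diff)
    then have s': "s' + int b' - 1 - (int K + 1) \<le> -T" using R4(1) T(1) by (auto simp: thr_eq_def)
    have s0: "s0 + int b - 1 - (int K + 1) \<le> -T" using low T ab by (simp add: of_nat_diff)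
    have below: "thr_eq T x y" if "x \<le> -T" "y \<le> -T" for x y using that by (simp add: thr_eq_def)
    show ?thesis unfolding ct_profile_def thr_equiv4
      using R4(2-4) below s' s0 ab by simp
  qed
qed

lemma ct_preserves_mono: "ct_preserves K T \<psi> \<Longrightarrow> T \<le> T' \<Longrightarrow> ct_preserves K T' \<psi>"
  unfolding ct_preserves_def using thr_equiv_mono by blast

lemma ct_preserves_Prop:
  assumes T: "0 < T"
  shows "ct_preserves K T (Prop p)"
  unfolding ct_preserves_def
proof (intro allI impI)
  fix s a b s' a' b'
  assume ab: "1 \<le> a" "a < b" "1 \<le> a'" "a' < b'"
    and R: "thr_equiv T (ct_profile K s a b) (ct_profile K s' a' b')"
    and sat: "sat_st (comp_tree (chain_kripke K (chain_state K s))) (chain_ct_trace K s a b) (Prop p)"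
  have R2: "thr_equiv T [int K + 1, s + int a - 1] [int K + 1, s' + int a' - 1]"
    using thr_equiv_map_nth[OF R, of "[0, 2]"] by (simp add: ct_profile_def)
  have "int K + 1 \<le> s + int a - 1" using sat_ct_chain_Prop[OF K ab(1,2)] sat by (rule iffD1)
  then have "int K + 1 \<le> s' + int a' - 1" using thr_equiv_pair_le_iff[OF T R2] by simp
  with sat_ct_chain_Prop[OF K ab(3,4)]
  show "sat_st (comp_tree (chain_kripke K (chain_state K s'))) (chain_ct_trace K s' a' b') (Prop p)"
    by (rule iffD2)
qed

lemma ct_preserves_Neg: "ct_preserves K T \<psi> \<Longrightarrow> ct_preserves K T (Neg \<psi>)"
  unfolding ct_preserves_def sat_st.simps(2) using thr_equiv_sym by blast

lemma ct_preserves_And: "ct_preserves K T \<psi> \<Longrightarrow> ct_preserves K T \<chi> \<Longrightarrow> ct_preserves K T (And \<psi> \<chi>)"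
  unfolding ct_preserves_def by auto

lemma ct_preserves_Bm:
  assumes T: "0 < T" and IH: "ct_preserves K T \<psi>"
  shows "ct_preserves K (2 * T) (Bm \<psi>)"
  unfolding ct_preserves_def
proof (intro allI impI)
  fix s a b s' a' b'
  assume s: "s \<le> 1" "s' \<le> 1" and ab: "1 \<le> a" "a < b" "1 \<le> a'" "a' < b'"
    and R: "thr_equiv (2 * T) (ct_profile K s a b) (ct_profile K s' a' b')"
    and "sat_st (comp_tree (chain_kripke K (chain_state K s))) (chain_ct_trace K s a b) (Bm \<psi>)"
  then obtain c where c: "a < c" "c < b"
    and sat: "sat_st (comp_tree (chain_kripke K (chain_state K s))) (chain_ct_trace K s a c) \<psi>"
    unfolding sat_ct_chain_Bm[OF K ab(2)] by blast
  obtain y where Y: "thr_equiv T [int K + 1, s, s + int a - 1, s + int b - 1, s + int c - 1]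
      [int K + 1, s', s' + int a' - 1, s' + int b' - 1, y]"
    using thr_equiv_snoc[OF T R, of "s + int c - 1"] by (auto simp: ct_profile_def)
  have "s' + int a' - 1 < y"
    using thr_equiv_pair_less_iff[OF T thr_equiv_map_nth[OF Y, of "[2, 4]", simplified]] c by simp
  moreover have "y < s' + int b' - 1"
    using thr_equiv_pair_less_iff[OF T thr_equiv_map_nth[OF Y, of "[4, 3]", simplified]] c by simp
  ultimately obtain c' where c': "a' < c'" "c' < b'" "y = s' + int c' - 1"
    by (intro that[of "nat (y - s' + 1)"]) auto
  have "thr_equiv T (ct_profile K s a c) (ct_profile K s' a' c')"
    using thr_equiv_map_nth[OF Y, of "[0, 1, 2, 4]"] c'(3) by (simp add: ct_profile_def)
  from ct_preservesD[OF IH s ab(1) _ ab(3) _ this sat] c c'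
  have "sat_st (comp_tree (chain_kripke K (chain_state K s'))) (chain_ct_trace K s' a' c') \<psi>" by simp
  then show "sat_st (comp_tree (chain_kripke K (chain_state K s'))) (chain_ct_trace K s' a' b') (Bm \<psi>)"
    unfolding sat_ct_chain_Bm[OF K ab(4)] using c' by blast
qed

lemma ct_preserves_Em:
  assumes T: "0 < T" and IH: "ct_preserves K T \<psi>"
  shows "ct_preserves K (2 * T) (Em \<psi>)"
  unfolding ct_preserves_def
proof (intro allI impI)
  fix s a b s' a' b'
  assume s: "s \<le> 1" "s' \<le> 1" and ab: "1 \<le> a" "a < b" "1 \<le> a'" "a' < b'"
    and R: "thr_equiv (2 * T) (ct_profile K s a b) (ct_profile K s' a' b')"
    and "sat_st (comp_tree (chain_kripke K (chain_state K s))) (chain_ct_trace K s a b) (Em \<psi>)"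
  then obtain c where c: "a < c" "c < b"
    and sat: "sat_st (comp_tree (chain_kripke K (chain_state K s))) (chain_ct_trace K s c b) \<psi>"
    unfolding sat_ct_chain_Em[OF K] by blast
  obtain y where Y: "thr_equiv T [int K + 1, s, s + int a - 1, s + int b - 1, s + int c - 1]
      [int K + 1, s', s' + int a' - 1, s' + int b' - 1, y]"
    using thr_equiv_snoc[OF T R, of "s + int c - 1"] by (auto simp: ct_profile_def)
  have "s' + int a' - 1 < y"
    using thr_equiv_pair_less_iff[OF T thr_equiv_map_nth[OF Y, of "[2, 4]", simplified]] c by simp
  moreover have "y < s' + int b' - 1"
    using thr_equiv_pair_less_iff[OF T thr_equiv_map_nth[OF Y, of "[4, 3]", simplified]] c by simp
  ultimately obtain c' where c': "a' < c'" "c' < b'" "y = s' + int c' - 1"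
    by (intro that[of "nat (y - s' + 1)"]) auto
  have "thr_equiv T (ct_profile K s c b) (ct_profile K s' c' b')"
    using thr_equiv_map_nth[OF Y, of "[0, 1, 4, 3]"] c'(3) by (simp add: ct_profile_def)
  from ct_preservesD[OF IH s _ _ _ _ this sat] ab c c'
  have "sat_st (comp_tree (chain_kripke K (chain_state K s'))) (chain_ct_trace K s' c' b') \<psi>" by simp
  then show "sat_st (comp_tree (chain_kripke K (chain_state K s'))) (chain_ct_trace K s' a' b') (Em \<psi>)"
    unfolding sat_ct_chain_Em[OF K] using c' by blast
qed

lemma ct_preserves_Bbar:
  assumes T: "0 < T" "2 * T \<le> int K" and IH: "ct_preserves K T \<psi>"
  shows "ct_preserves K (2 * T) (Bbar \<psi>)"
  unfolding ct_preserves_def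
proof (intro allI impI)
  fix s a b s' a' b'
  assume s: "s \<le> 1" "s' \<le> 1" and ab: "1 \<le> a" "a < b" "1 \<le> a'" "a' < b'"
    and R: "thr_equiv (2 * T) (ct_profile K s a b) (ct_profile K s' a' b')"
    and "sat_st (comp_tree (chain_kripke K (chain_state K s))) (chain_ct_trace K s a b) (Bbar \<psi>)"
  then obtain s0 d where s0: "chain_state K s0 = chain_state K s" and d: "b < d"
    and eq: "chain_trace K s0 (b - 1) = chain_trace K s (b - 1)"
    and sat: "sat_st (comp_tree (chain_kripke K (chain_state K s0))) (chain_ct_trace K s0 a d) \<psi>"
    unfolding sat_ct_chain_Bbar[OF K ab(1,2)] by auto
  have "s0 \<le> 1" using s0 s(1) chain_state_le_1_iff[OF K] by metis
  have R0: "thr_equiv (2 * T) (ct_profile K s0 a b) (ct_profile K s' a' b')"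
    using ct_profile_shift[OF _ T(2) ab s(1) R eq] T(1) by simp
  obtain y where Y: "thr_equiv T [int K + 1, s0, s0 + int a - 1, s0 + int b - 1, s0 + int d - 1]
      [int K + 1, s', s' + int a' - 1, s' + int b' - 1, y]"
    using thr_equiv_snoc[OF T(1) R0, of "s0 + int d - 1"] by (auto simp: ct_profile_def)
  have "s' + int b' - 1 < y"
    using thr_equiv_pair_less_iff[OF T(1) thr_equiv_map_nth[OF Y, of "[3, 4]", simplified]] d by simp
  then obtain d' where d': "b' < d'" "y = s' + int d' - 1"
    by (intro that[of "nat (y - s' + 1)"]) auto
  have "thr_equiv T (ct_profile K s0 a d) (ct_profile K s' a' d')"
    using thr_equiv_map_nth[OF Y, of "[0, 1, 2, 4]"] d'(2) by (simp add: ct_profile_def)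
  from ct_preservesD[OF IH \<open>s0 \<le> 1\<close> s(2) ab(1) _ ab(3) _ this sat] ab d d'
  have "sat_st (comp_tree (chain_kripke K (chain_state K s'))) (chain_ct_trace K s' a' d') \<psi>" by simp
  then show "sat_st (comp_tree (chain_kripke K (chain_state K s'))) (chain_ct_trace K s' a' b') (Bbar \<psi>)"
    unfolding sat_ct_chain_Bbar[OF K ab(3,4)] using d' by blast
qed

lemma ct_preserves_Ebar:
  assumes T: "0 < T" "2 * T \<le> int K" and IH: "ct_preserves K T \<psi>"
  shows "ct_preserves K (2 * T) (Ebar \<psi>)"
  unfolding ct_preserves_def
proof (intro allI impI)
  fix s a b s' a' b'
  assume s: "s \<le> 1" "s' \<le> 1" and ab: "1 \<le> a" "a < b" "1 \<le> a'" "a' < b'"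
    and R: "thr_equiv (2 * T) (ct_profile K s a b) (ct_profile K s' a' b')"
    and "sat_st (comp_tree (chain_kripke K (chain_state K s))) (chain_ct_trace K s a b) (Ebar \<psi>)"
  then obtain s0 v where s0: "chain_state K s0 = chain_state K s" and v: "1 \<le> v" "v < a"
    and eq: "chain_trace K s0 (b - 1) = chain_trace K s (b - 1)"
    and sat: "sat_st (comp_tree (chain_kripke K (chain_state K s0))) (chain_ct_trace K s0 v b) \<psi>"
    unfolding sat_ct_chain_Ebar[OF K ab(1,2)] by auto
  have "s0 \<le> 1" using s0 s(1) chain_state_le_1_iff[OF K] by metis
  have R0: "thr_equiv (2 * T) (ct_profile K s0 a b) (ct_profile K s' a' b')"
    using ct_profile_shift[OF _ T(2) ab s(1) R eq] T(1) by simp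
  obtain y where Y: "thr_equiv T [int K + 1, s0, s0 + int a - 1, s0 + int b - 1, s0 + int v - 1]
      [int K + 1, s', s' + int a' - 1, s' + int b' - 1, y]"
    using thr_equiv_snoc[OF T(1) R0, of "s0 + int v - 1"] by (auto simp: ct_profile_def)
  have "s' \<le> y"
    using thr_equiv_pair_le_iff[OF T(1) thr_equiv_map_nth[OF Y, of "[1, 4]", simplified]] v by simp
  moreover have "y < s' + int a' - 1"
    using thr_equiv_pair_less_iff[OF T(1) thr_equiv_map_nth[OF Y, of "[4, 2]", simplified]] v by simp
  ultimately obtain v' where v': "1 \<le> v'" "v' < a'" "y = s' + int v' - 1"
    by (intro that[of "nat (y - s' + 1)"]) auto
  have "thr_equiv T (ct_profile K s0 v b) (ct_profile K s' v' b')"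
    using thr_equiv_map_nth[OF Y, of "[0, 1, 4, 3]"] v'(3) by (simp add: ct_profile_def)
  from ct_preservesD[OF IH \<open>s0 \<le> 1\<close> s(2) v(1) _ v'(1) _ this sat] ab v v'
  have "sat_st (comp_tree (chain_kripke K (chain_state K s'))) (chain_ct_trace K s' v' b') \<psi>" by simp
  then show "sat_st (comp_tree (chain_kripke K (chain_state K s'))) (chain_ct_trace K s' a' b') (Ebar \<psi>)"
    unfolding sat_ct_chain_Ebar[OF K ab(3,4)] using v' by blast
qed

lemma ct_preserves_height: "2 ^ hs_height \<psi> \<le> int K \<Longrightarrow> ct_preserves K (2 ^ hs_height \<psi>) \<psi>"
proof (induction \<psi>)
  have half: "2 ^ h \<le> int K" if "2 * 2 ^ h \<le> int K" for h :: nat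
    using that zero_less_power[of "2::int" h] by linarith
  {
    case (Prop p)
    then show ?case by (simp add: ct_preserves_Prop)
  next
    case (Neg \<psi>)
    then show ?case by (simp add: ct_preserves_Neg)
  next
    case (And \<psi> \<chi>)
    have "(2::int) ^ hs_height \<psi> \<le> 2 ^ hs_height (And \<psi> \<chi>)"
      "(2::int) ^ hs_height \<chi> \<le> 2 ^ hs_height (And \<psi> \<chi>)"
      by (simp_all add: power_increasing)
    then show ?case using And ct_preserves_mono ct_preserves_And by (meson order_trans)
  next
    case (Bm \<psi>)
    then have "ct_preserves K (2 ^ hs_height \<psi>) \<psi>" using half by simp
    with Bm.prems show ?case using ct_preserves_Bm[of "2 ^ hs_height \<psi>"] by simp
  next
    case (Em \<psi>)
    then have "ct_preserves K (2 ^ hs_height \<psi>) \<psi>" using half by simp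
    with Em.prems show ?case using ct_preserves_Em[of "2 ^ hs_height \<psi>"] by simp
  next
    case (Bbar \<psi>)
    then have "ct_preserves K (2 ^ hs_height \<psi>) \<psi>" using half by simp
    with Bbar.prems show ?case using ct_preserves_Bbar[of "2 ^ hs_height \<psi>"] by simp
  next
    case (Ebar \<psi>)
    then have "ct_preserves K (2 ^ hs_height \<psi>) \<psi>" using half by simp
    with Ebar.prems show ?case using ct_preserves_Ebar[of "2 ^ hs_height \<psi>"] by simp
  }
qed

end

lemma ct_profile_initial: "ct_profile K s 1 (Suc n) = map ((!) (st_profile K s n)) [0, 1, 1, 2]"
  by (simp add: ct_profile_def st_profile_def)

context
  fixes \<phi> :: "'ap hs" and K :: nat
  assumes K_def: "K = 2 ^ Suc (hs_height \<phi>)"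
begin

lemma chain_height_bounds: "1 \<le> K" "0 < (2::int) ^ hs_height \<phi>" "2 * 2 ^ hs_height \<phi> \<le> int K"
  unfolding K_def by simp_all

lemma st_preserves_chain_height: "st_preserves K (2 ^ hs_height \<phi>) \<phi>"
  using chain_height_bounds by (intro st_preserves_height) linarith+

lemma models_st_chain_0_if_1:
  assumes models1: "models_st (chain_kripke K 1) \<phi>"
  shows "models_st (chain_kripke K 0) \<phi>"
  unfolding models_st_def
proof (intro allI impI)
  let ?K0 = "chain_kripke K 0 :: (nat, 'ap) kripke" and ?K1 = "chain_kripke K 1 :: (nat, 'ap) kripke"
  note K = chain_height_bounds(1) and T = chain_height_bounds(2,3)
  fix \<rho> assume "is_init_trace ?K0 \<rho>"
  then obtain s' n' where n': "1 \<le> n'" and \<rho>: "\<rho> = chain_trace K s' n'" and "s' \<le> 0"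
    unfolding is_init_trace_chain_iff[OF K] by (auto simp: chain_state_eq_0_iff)
  then obtain n where n: "1 \<le> n"
    and R: "thr_equiv (2 ^ hs_height \<phi>) (st_profile K 1 n) (st_profile K s' n')"
    using equiv_profile_from_1[OF T] by blast
  have "is_init_trace ?K1 (chain_trace K 1 n)"
    unfolding is_init_trace_chain_iff[OF K] using n chain_state_eq_1_iff[OF K]
    by (intro exI[of _ 1] exI[of _ n]) simp
  then have "sat_st ?K1 (chain_trace K 1 n) \<phi>" using models1 unfolding models_st_def by blast
  then have "sat_st ?K0 (chain_trace K 1 n) \<phi>" by (metis sat_st_chain_Init_cong)
  then show "sat_st ?K0 \<rho> \<phi>" using st_preservesD[OF st_preserves_chain_height n n' R] \<rho> by simp
qed

lemma models_st_chain_1_if_0: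
  assumes models0: "models_st (chain_kripke K 0) \<phi>"
  shows "models_st (chain_kripke K 1) \<phi>"
  unfolding models_st_def
proof (intro allI impI)
  let ?K0 = "chain_kripke K 0 :: (nat, 'ap) kripke" and ?K1 = "chain_kripke K 1 :: (nat, 'ap) kripke"
  note K = chain_height_bounds(1) and T = chain_height_bounds(2,3)
  fix \<rho> assume "is_init_trace ?K1 \<rho>"
  then obtain n where n: "1 \<le> n" and \<rho>: "\<rho> = chain_trace K 1 n"
    unfolding is_init_trace_chain_iff[OF K] using chain_state_eq_1_iff[OF K] by auto
  then obtain s' n' where "s' \<le> 0" and n': "1 \<le> n'"
    and R: "thr_equiv (2 ^ hs_height \<phi>) (st_profile K 1 n) (st_profile K s' n')"
    using equiv_profile_from_0[OF T] by blast
  then have "is_init_trace ?K0 (chain_trace K s' n')"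
    unfolding is_init_trace_chain_iff[OF K] by (auto simp: chain_state_eq_0_iff)
  then have "sat_st ?K0 (chain_trace K s' n') \<phi>" using models0 unfolding models_st_def by blast
  then have "sat_st ?K0 \<rho> \<phi>"
    using st_preservesD[OF st_preserves_chain_height n' n thr_equiv_sym[OF R]] \<rho> by simp
  then show "sat_st ?K1 \<rho> \<phi>" by (metis sat_st_chain_Init_cong)
qed

lemma models_st_chain_1_iff_0: "models_st (chain_kripke K 1) \<phi> \<longleftrightarrow> models_st (chain_kripke K 0) \<phi>"
  using models_st_chain_0_if_1 models_st_chain_1_if_0 by blast

lemma ct_preserves_chain_height: "ct_preserves K (2 ^ hs_height \<phi>) \<phi>"
  using chain_height_bounds by (intro ct_preserves_height) linarith+

lemma models_ct_chain_0_if_1: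
  assumes models1: "models_ct (chain_kripke K 1) \<phi>"
  shows "models_ct (chain_kripke K 0) \<phi>"
  unfolding models_ct_def models_st_def
proof (intro allI impI)
  let ?C0 = "comp_tree (chain_kripke K 0 :: (nat, 'ap) kripke)"
    and ?C1 = "comp_tree (chain_kripke K 1 :: (nat, 'ap) kripke)"
  note K = chain_height_bounds(1) and T = chain_height_bounds(2,3)
  have s1: "chain_state K 1 = 1" using chain_state_eq_1_iff[OF K] by simp
  fix \<rho> assume "is_init_trace ?C0 \<rho>"
  then obtain s' b' where s': "chain_state K s' = 0" and b': "1 < b'"
    and \<rho>: "\<rho> = chain_ct_trace K s' 1 b'"
    unfolding is_init_trace_comp_tree_chain_iff[OF K] by blast
  define n' where "n' = b' - 1"
  have n': "1 \<le> n'" "b' = Suc n'" using b' unfolding n'_def by auto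
  have "s' \<le> 0" using s' by (simp add: chain_state_eq_0_iff)
  then obtain n where n: "1 \<le> n"
    and R: "thr_equiv (2 ^ hs_height \<phi>) (st_profile K 1 n) (st_profile K s' n')"
    using equiv_profile_from_1[OF T n'(1)] by blast
  have "is_init_trace ?C1 (chain_ct_trace K 1 1 (Suc n))"
    unfolding is_init_trace_comp_tree_chain_iff[OF K] using n s1
    by (intro exI[of _ 1] exI[of _ "Suc n"]) simp
  then have sat:
      "sat_st (comp_tree (chain_kripke K (chain_state K 1))) (chain_ct_trace K 1 1 (Suc n)) \<phi>"
    using models1 s1 unfolding models_ct_def models_st_def by simp
  have "thr_equiv (2 ^ hs_height \<phi>) (ct_profile K 1 1 (Suc n)) (ct_profile K s' 1 (Suc n'))"
    unfolding ct_profile_initial using thr_equiv_map_nth[OF R, of "[0, 1, 1, 2]"]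
    by (simp add: st_profile_def)
  from ct_preservesD[OF ct_preserves_chain_height _ _ _ _ _ _ this sat] \<open>s' \<le> 0\<close> n n' s'
  show "sat_st ?C0 \<rho> \<phi>" using \<rho> by simp
qed

lemma models_ct_chain_1_if_0:
  assumes models0: "models_ct (chain_kripke K 0) \<phi>"
  shows "models_ct (chain_kripke K 1) \<phi>"
  unfolding models_ct_def models_st_def
proof (intro allI impI)
  let ?C0 = "comp_tree (chain_kripke K 0 :: (nat, 'ap) kripke)"
    and ?C1 = "comp_tree (chain_kripke K 1 :: (nat, 'ap) kripke)"
  note K = chain_height_bounds(1) and T = chain_height_bounds(2,3)
  have s1: "chain_state K 1 = 1" using chain_state_eq_1_iff[OF K] by simp
  fix \<rho> assume "is_init_trace ?C1 \<rho>"
  then obtain s b where "chain_state K s = 1" and b: "1 < b" and \<rho>: "\<rho> = chain_ct_trace K s 1 b"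
    unfolding is_init_trace_comp_tree_chain_iff[OF K] by blast
  then have "s = 1" using chain_state_eq_1_iff[OF K] by simp
  define n where "n = b - 1"
  have n: "1 \<le> n" "b = Suc n" using b unfolding n_def by auto
  obtain s' n' where "s' \<le> 0" and n': "1 \<le> n'"
    and R: "thr_equiv (2 ^ hs_height \<phi>) (st_profile K 1 n) (st_profile K s' n')"
    using equiv_profile_from_0[OF T n(1)] by blast
  then have s': "chain_state K s' = 0" by (simp add: chain_state_eq_0_iff)
  have "is_init_trace ?C0 (chain_ct_trace K s' 1 (Suc n'))"
    unfolding is_init_trace_comp_tree_chain_iff[OF K] using n' s'
    by (intro exI[of _ s'] exI[of _ "Suc n'"]) simp
  then have sat:
      "sat_st (comp_tree (chain_kripke K (chain_state K s'))) (chain_ct_trace K s' 1 (Suc n')) \<phi>"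
    using models0 s' unfolding models_ct_def models_st_def by simp
  have "thr_equiv (2 ^ hs_height \<phi>) (ct_profile K s' 1 (Suc n')) (ct_profile K 1 1 (Suc n))"
    unfolding ct_profile_initial using thr_equiv_map_nth[OF thr_equiv_sym[OF R], of "[0, 1, 1, 2]"]
    by (simp add: st_profile_def)
  from ct_preservesD[OF ct_preserves_chain_height _ _ _ _ _ _ this sat] \<open>s' \<le> 0\<close> n n'
  show "sat_st ?C1 \<rho> \<phi>" using \<rho> \<open>s = 1\<close> s1 by simp
qed

lemma models_ct_chain_1_iff_0: "models_ct (chain_kripke K 1) \<phi> \<longleftrightarrow> models_ct (chain_kripke K 0) \<phi>"
  using models_ct_chain_0_if_1 models_ct_chain_1_if_0 by blast

end

lemma not_geq_lin_if_chains_indistinguishable: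
  fixes L :: "'ap semantics"
  assumes indist: "\<And>K \<phi>. K = 2 ^ Suc (hs_height \<phi>) \<Longrightarrow> L (chain_kripke K 1) \<phi> \<longleftrightarrow> L (chain_kripke K 0) \<phi>"
  shows "\<not> expr_geq L models_lin"
proof (rule not_expr_geqI[where \<phi> = "hs_future undefined"])
  fix \<psi> :: "'ap hs"
  define K where "K = (2::nat) ^ Suc (hs_height \<psi>)"
  have K: "1 \<le> K" unfolding K_def by simp
  show "\<exists>(M :: (nat, 'ap) kripke) (M' :: (nat, 'ap) kripke). finite_kripke M \<and> finite_kripke M' \<and>
      models_lin M (hs_future undefined) \<and> \<not> models_lin M' (hs_future undefined) \<and>
      (L M \<psi> \<longleftrightarrow> L M' \<psi>)"
    by (rule exI[of _ "chain_kripke K 1"], rule exI[of _ "chain_kripke K 0"])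
      (use models_lin_chain_1[OF K] indist[OF K_def] in
        \<open>simp add: finite_chain_kripke not_models_lin_chain_0\<close>)
qed

lemma not_st_geq_lin: "\<not> expr_geq (models_st :: 'ap semantics) models_lin"
  by (rule not_geq_lin_if_chains_indistinguishable) (rule models_st_chain_1_iff_0)

lemma not_ct_geq_lin: "\<not> expr_geq (models_ct :: 'ap semantics) models_lin"
  by (rule not_geq_lin_if_chains_indistinguishable) (rule models_ct_chain_1_iff_0)

theorem theorem5p12:
  shows "expr_incomparable (models_lin :: ('ap::finite) semantics) models_st \<and>
         expr_incomparable (models_lin :: ('ap::finite) semantics) models_ct"
  unfolding expr_incomparable_def
  using not_lin_geq_st not_st_geq_lin not_lin_geq_ct not_ct_geq_lin by blast

end
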